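(* Let $M$ be an ordinal monoid with merge. For every $A\subseteq M$ there exists an FO-approximant of $\pi$ from $A^{+}$ (the finite nonempty words over $A$, viewed as a subset of $M^{\mathrm{ord}}$) to $\mathrm{Cl}^{+}_{\sharp}(A)$.
   Context: Countable ordinal words over $\Sigma$: maps $w\colon\alpha\to\Sigma$, $\alpha$ a countable ordinal; $\Sigma^{\mathrm{ord}}$ their set. An ordinal monoid: set $M$ with $\pi\colon M^{\mathrm{ord}}\to M$, $\pi(x)=x$ on one-letter words, generalised associativity; $1=\pi(\varepsilon)$, $x\cdot y=\pi(xy)$, $x^\omega=\pi(xxx\cdots)$; ordered by $\le$ if $u\le v$ letterwise implies $\pi(u)\le\pi(v)$. $x^!$ idempotent power, $x^{!+k}$ eventual value of $x^{n!+k}$ in a finite semigroup. Ordinal monoid with merge: $(M,1,\le,\cdot,-^\omega,-^\sharp)$, $M$ finite, $(M,1,\le,\cdot,-^\omega)$ the presentation of an ordered finite ordinal monoid, $-^\sharp$ monotone with $a^{!+k}\le a^\sharp$, $(a^!)^\sharp=a^!$, $a^\sharp a^\sharp=(a^\sharp)^\sharp=a^\sharp$, $(ab)^\sharp=a(ba)^\sharp b$. $\mathrm{Cl}^{+}_{\sharp}(A)$ is the closure of $A$ under $\cdot$ and $-^\sharp$. FO logic over alphabet $M$ (atoms $x<y$, $a(x)$); FO-definable languages and maps (preimages FO-definable). For FO-definable $L\subseteq M^{\mathrm{ord}}$, an FO-approximant of $\pi$ over $L$ is an FO-definable $\rho\colon L\to M$ with $\pi(u)\le\rho(u)$ for all $u\in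 L$; it is "from $L$ to $Y$" if its values lie in $Y\subseteq M$. *)

theory Defs
  imports Main
begin

text \<open>A countable ordinal word over an alphabet is represented by a well-order r on a
subset of nat (its positions, Field r) together with a labelling w. Every countable
ordinal is order-isomorphic to such a well-order, and words are identified up to
label-preserving order isomorphism (the product pi is required to be invariant).\<close>

type_synonym 'a oword = "nat rel \<times> (nat \<Rightarrow> 'a)"

definition ordword :: "'a oword \<Rightarrow> bool" where
  "ordword u \<longleftrightarrow> Well_order (fst u)"

definition wdom :: "'a oword \<Rightarrow> nat set" where
  "wdom u = Field (fst u)"

definition words_over :: "'a set \<Rightarrow> 'a oword set" where
  "words_over S = {u. ordword u \<and> (\<forall>x\<in>wdom u. snd u x \<in> S)}"

definition word_iso :: "'a oword \<Rightarrow> 'a oword \<Rightarrow> bool" where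
  "word_iso u v \<longleftrightarrow> (\<exists>f. iso (fst u) (fst v) f \<and> (\<forall>x\<in>wdom u. snd v (f x) = snd u x))"

definition restr :: "nat rel \<Rightarrow> nat set \<Rightarrow> nat rel" where
  "restr r S = r \<inter> (S \<times> S)"

definition empty_word :: "'a oword" where
  "empty_word = ({}, (\<lambda>_. undefined))"

definition plus_words :: "'a set \<Rightarrow> 'a oword set" where
  "plus_words A = {u \<in> words_over A. finite (wdom u) \<and> wdom u \<noteq> {}}"

definition ordered_ordinal_monoid :: "('m \<Rightarrow> 'm \<Rightarrow> bool) \<Rightarrow> ('m oword \<Rightarrow> 'm) \<Rightarrow> bool" where
  "ordered_ordinal_monoid le pi \<longleftrightarrow>
     \<comment> \<open>le is a partial order\<close>
     (\<forall>x. le x x) \<and> (\<forall>x y z. le x y \<longrightarrow> le y z \<longrightarrow> le x z) \<and>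
     (\<forall>x y. le x y \<longrightarrow> le y x \<longrightarrow> x = y) \<and>
     \<comment> \<open>pi depends only on the isomorphism class of the word\<close>
     (\<forall>u v. ordword u \<longrightarrow> ordword v \<longrightarrow> word_iso u v \<longrightarrow> pi u = pi v) \<and>
     \<comment> \<open>pi on one-letter words\<close>
     (\<forall>n w. pi ({(n, n)}, w) = w n) \<and>
     \<comment> \<open>generalised associativity, nonempty blocks: a partition of the positions into
         convex blocks, each block represented by one of its elements\<close>
     (\<forall>u blk. ordword u \<longrightarrow>
        (\<forall>x\<in>wdom u. blk x \<in> wdom u \<and> blk (blk x) = blk x) \<longrightarrow>
        (\<forall>x y z. x \<in> wdom u \<longrightarrow> z \<in> wdom u \<longrightarrow> (x, y) \<in> fst u \<longrightarrow> (y, z) \<in> fst u \<longrightarrow>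
                 blk x = blk z \<longrightarrow> blk y = blk x) \<longrightarrow>
        pi u = pi (restr (fst u) (blk ` wdom u),
                   (\<lambda>m. pi (restr (fst u) {x \<in> wdom u. blk x = m}, snd u)))) \<and>
     \<comment> \<open>generalised associativity, empty blocks: letters equal to pi of the empty word
         may be deleted\<close>
     (\<forall>u E. ordword u \<longrightarrow> E \<subseteq> wdom u \<longrightarrow> (\<forall>e\<in>E. snd u e = pi empty_word) \<longrightarrow>
        pi u = pi (restr (fst u) (wdom u - E), snd u)) \<and>
     \<comment> \<open>pi is monotone letterwise\<close>
     (\<forall>r w w'. ordword (r, w) \<longrightarrow> (\<forall>x\<in>Field r. le (w x) (w' x)) \<longrightarrow>
        le (pi (r, w)) (pi (r, w')))"

definition mult :: "('m oword \<Rightarrow> 'm) \<Rightarrow> 'm \<Rightarrow> 'm \<Rightarrow> 'm" where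
  "mult pi a b = pi ({(0, 0), (0, 1), (1, 1)}, (\<lambda>n. if n = 0 then a else b))"

definition mpow :: "('m oword \<Rightarrow> 'm) \<Rightarrow> 'm \<Rightarrow> nat \<Rightarrow> 'm" where
  "mpow pi a n = pi ({(i, j). i \<le> j \<and> j < n}, (\<lambda>_. a))"

definition idem_plus :: "('m oword \<Rightarrow> 'm) \<Rightarrow> 'm \<Rightarrow> nat \<Rightarrow> 'm" where
  "idem_plus pi a k = (THE x. \<exists>N. \<forall>n\<ge>N. mpow pi a (fact n + k) = x)"

definition idem :: "('m oword \<Rightarrow> 'm) \<Rightarrow> 'm \<Rightarrow> 'm" where
  "idem pi a = idem_plus pi a 0"

definition ordinal_monoid_with_merge ::
  "('m::finite \<Rightarrow> 'm \<Rightarrow> bool) \<Rightarrow> ('m oword \<Rightarrow> 'm) \<Rightarrow> ('m \<Rightarrow> 'm) \<Rightarrow> bool" where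
  "ordinal_monoid_with_merge le pi sh \<longleftrightarrow>
     ordered_ordinal_monoid le pi \<and>
     (\<forall>a b. le a b \<longrightarrow> le (sh a) (sh b)) \<and>
     (\<forall>a k. le (idem_plus pi a k) (sh a)) \<and>
     (\<forall>a. sh (idem pi a) = idem pi a) \<and>
     (\<forall>a. mult pi (sh a) (sh a) = sh a) \<and>
     (\<forall>a. sh (sh a) = sh a) \<and>
     (\<forall>a b. sh (mult pi a b) = mult pi a (mult pi (sh (mult pi b a)) b))"

inductive_set cl_sharp :: "('m oword \<Rightarrow> 'm) \<Rightarrow> ('m \<Rightarrow> 'm) \<Rightarrow> 'm set \<Rightarrow> 'm set"
  for pi sh A where
  base: "a \<in> A \<Longrightarrow> a \<in> cl_sharp pi sh A"
| mul: "a \<in> cl_sharp pi sh A \<Longrightarrow> b \<in> cl_sharp pi sh A \<Longrightarrow> mult pi a b \<in> cl_sharp pi sh A"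
| shp: "a \<in> cl_sharp pi sh A \<Longrightarrow> sh a \<in> cl_sharp pi sh A"

datatype 'a fo =
    FLess nat nat
  | FEq nat nat
  | FLetter 'a nat
  | FNeg "'a fo"
  | FConj "'a fo" "'a fo"
  | FEx nat "'a fo"

fun fv :: "'a fo \<Rightarrow> nat set" where
  "fv (FLess x y) = {x, y}"
| "fv (FEq x y) = {x, y}"
| "fv (FLetter a x) = {x}"
| "fv (FNeg f) = fv f"
| "fv (FConj f g) = fv f \<union> fv g"
| "fv (FEx x f) = fv f - {x}"

fun sat :: "'a oword \<Rightarrow> (nat \<Rightarrow> nat) \<Rightarrow> 'a fo \<Rightarrow> bool" where
  "sat u s (FLess x y) \<longleftrightarrow> (s x, s y) \<in> fst u \<and> s x \<noteq> s y"
| "sat u s (FEq x y) \<longleftrightarrow> s x = s y"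
| "sat u s (FLetter a x) \<longleftrightarrow> snd u (s x) = a"
| "sat u s (FNeg f) \<longleftrightarrow> \<not> sat u s f"
| "sat u s (FConj f g) \<longleftrightarrow> sat u s f \<and> sat u s g"
| "sat u s (FEx x f) \<longleftrightarrow> (\<exists>p\<in>wdom u. sat u (s(x := p)) f)"

definition fo_definable :: "'a oword set \<Rightarrow> bool" where
  "fo_definable L \<longleftrightarrow> (\<exists>f. fv f = {} \<and> L = {u. ordword u \<and> sat u (\<lambda>_. 0) f})"

definition fo_approximant ::
  "('m \<Rightarrow> 'm \<Rightarrow> bool) \<Rightarrow> ('m oword \<Rightarrow> 'm) \<Rightarrow> 'm oword set \<Rightarrow> 'm set \<Rightarrow> ('m oword \<Rightarrow> 'm) \<Rightarrow> bool" where
  "fo_approximant le pi L Y rho \<longleftrightarrow>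
     fo_definable L \<and> (\<forall>m. fo_definable {u \<in> L. rho u = m}) \<and>
     (\<forall>u\<in>L. le (pi u) (rho u) \<and> rho u \<in> Y)"

end

theory Submission
  imports Defs
begin
fun sat_list :: "'a list \<Rightarrow> (nat \<Rightarrow> nat) \<Rightarrow> 'a fo \<Rightarrow> bool" where
  "sat_list w s (FLess x y) \<longleftrightarrow> s x < s y"
| "sat_list w s (FEq x y) \<longleftrightarrow> s x = s y"
| "sat_list w s (FLetter a x) \<longleftrightarrow> w ! s x = a"
| "sat_list w s (FNeg f) \<longleftrightarrow> \<not> sat_list w s f"
| "sat_list w s (FConj f g) \<longleftrightarrow> sat_list w s f \<and> sat_list w s g"
| "sat_list w s (FEx x f) \<longleftrightarrow> (\<exists>p<length w. sat_list w (s(x := p)) f)"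

lemma sat_list_cong: "(\<forall>v\<in>fv f. s v = s' v) \<Longrightarrow> sat_list w s f = sat_list w s' f"
proof (induction f arbitrary: s s')
  case (FEx x f)
  have "sat_list w (s(x := p)) f = sat_list w (s'(x := p)) f" for p
    by (rule FEx.IH) (use FEx.prems in auto)
  then show ?case by simp
next
  case (FConj f g)
  then show ?case by (metis Un_iff fv.simps(5) sat_list.simps(5))
qed simp_all

lemma sat_list_closed: "fv f = {} \<Longrightarrow> sat_list w s f = sat_list w (\<lambda>_. 0) f"
  by (rule sat_list_cong) auto

definition list_definable :: "'a list set \<Rightarrow> bool" where
  "list_definable K \<longleftrightarrow> (\<exists>f. fv f = {} \<and> (\<forall>w. sat_list w (\<lambda>_. 0) f \<longleftrightarrow> w \<in> K))"

lemma list_definableI: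
  "fv f = {} \<Longrightarrow> (\<And>w. sat_list w (\<lambda>_. 0) f \<longleftrightarrow> w \<in> K) \<Longrightarrow> list_definable K"
  unfolding list_definable_def by blast

lemma list_definableE:
  assumes "list_definable K"
  obtains f where "fv f = {}" "\<forall>w s. sat_list w s f \<longleftrightarrow> w \<in> K"
proof -
  obtain f where f: "fv f = {}" "\<forall>w. sat_list w (\<lambda>_. 0) f \<longleftrightarrow> w \<in> K"
    using assms unfolding list_definable_def by blast
  have "sat_list w s f \<longleftrightarrow> w \<in> K" for w s
    using f(2) sat_list_closed[OF f(1), of w s] by simp
  with f(1) show thesis using that by blast
qed

lemma list_definable_Compl:
  assumes "list_definable K" shows "list_definable (- K)"
proof -
  obtain f where "fv f = {}" "\<forall>w s. sat_list w s f \<longleftrightarrow> w \<in> K"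
    using assms by (rule list_definableE)
  then show ?thesis by (intro list_definableI[of "FNeg f"]) auto
qed

lemma list_definable_Int:
  assumes "list_definable K" "list_definable L" shows "list_definable (K \<inter> L)"
proof -
  obtain f where "fv f = {}" "\<forall>w s. sat_list w s f \<longleftrightarrow> w \<in> K"
    using assms(1) by (rule list_definableE)
  moreover obtain g where "fv g = {}" "\<forall>w s. sat_list w s g \<longleftrightarrow> w \<in> L"
    using assms(2) by (rule list_definableE)
  ultimately show ?thesis by (intro list_definableI[of "FConj f g"]) auto
qed

lemma list_definable_Un:
  assumes "list_definable K" "list_definable L" shows "list_definable (K \<union> L)"
proof -
  have "list_definable (- (- K \<inter> - L))"
    using assms by (intro list_definable_Compl list_definable_Int)
  then show ?thesis by simp
qed

lemma list_definable_UNIV: "list_definable UNIV"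
  by (rule list_definableI[of "FNeg (FEx 0 (FNeg (FEq 0 0)))"]) auto

lemma list_definable_empty: "list_definable {}"
  using list_definable_Compl[OF list_definable_UNIV] by simp

lemma list_definable_UN:
  "finite I \<Longrightarrow> (\<And>i. i \<in> I \<Longrightarrow> list_definable (K i)) \<Longrightarrow> list_definable (\<Union>i\<in>I. K i)"
  by (induction I rule: finite_induct) (auto intro: list_definable_Un list_definable_empty)

lemma list_definable_INT:
  "finite I \<Longrightarrow> (\<And>i. i \<in> I \<Longrightarrow> list_definable (K i)) \<Longrightarrow> list_definable (\<Inter>i\<in>I. K i)"
  by (induction I rule: finite_induct) (auto intro: list_definable_Int list_definable_UNIV)

lemma list_definable_occurs: "list_definable {w. a \<in> set w}"
  by (rule list_definableI[of "FEx 0 (FLetter a 0)"]) (auto simp: in_set_conv_nth)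

lemma list_definable_lists: "list_definable {w. set w \<subseteq> (X :: 'a::finite set)}"
proof -
  have "{w. set w \<subseteq> X} = (\<Inter>a\<in>-X. - {w. a \<in> set w})" by auto
  moreover have "list_definable (\<Inter>a\<in>-X. - {w. a \<in> set w})"
    by (rule list_definable_INT) (auto intro: list_definable_Compl list_definable_occurs)
  ultimately show ?thesis by simp
qed

fun shift_fo :: "nat \<Rightarrow> 'a fo \<Rightarrow> 'a fo" where
  "shift_fo k (FLess x y) = FLess (x + k) (y + k)"
| "shift_fo k (FEq x y) = FEq (x + k) (y + k)"
| "shift_fo k (FLetter a x) = FLetter a (x + k)"
| "shift_fo k (FNeg f) = FNeg (shift_fo k f)"
| "shift_fo k (FConj f g) = FConj (shift_fo k f) (shift_fo k g)"
| "shift_fo k (FEx x f) = FEx (x + k) (shift_fo k f)"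

fun bound_vars :: "'a fo \<Rightarrow> nat set" where
  "bound_vars (FNeg f) = bound_vars f"
| "bound_vars (FConj f g) = bound_vars f \<union> bound_vars g"
| "bound_vars (FEx x f) = insert x (bound_vars f)"
| "bound_vars _ = {}"

lemma sat_list_shift_fo: "sat_list w s (shift_fo k f) = sat_list w (\<lambda>v. s (v + k)) f"
proof (induction f arbitrary: s)
  case (FEx x f)
  have "(\<lambda>v. (s(x + k := p)) (v + k)) = (\<lambda>v. s (v + k))(x := p)" for p
    by auto
  then show ?case using FEx by simp
qed auto

lemma fv_shift_fo: "fv (shift_fo k f) = (\<lambda>v. v + k) ` fv f"
  by (induction f) auto

lemma bound_vars_shift_fo: "bound_vars (shift_fo k f) = (\<lambda>v. v + k) ` bound_vars f"
  by (induction f) auto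

text \<open>Relativisation of quantifiers to the positions strictly between the values of two
  variables; None stands for the corresponding end of the word.\<close>

definition in_interval_fo :: "nat option \<Rightarrow> nat option \<Rightarrow> nat \<Rightarrow> 'a fo" where
  "in_interval_fo lo hi z = FConj (case lo of None \<Rightarrow> FEq z z | Some l \<Rightarrow> FLess l z)
                                 (case hi of None \<Rightarrow> FEq z z | Some h \<Rightarrow> FLess z h)"

fun relativise :: "nat option \<Rightarrow> nat option \<Rightarrow> 'a fo \<Rightarrow> 'a fo" where
  "relativise lo hi (FEx x f) = FEx x (FConj (in_interval_fo lo hi x) (relativise lo hi f))"
| "relativise lo hi (FNeg f) = FNeg (relativise lo hi f)"
| "relativise lo hi (FConj f g) = FConj (relativise lo hi f) (relativise lo hi g)"
| "relativise lo hi f = f"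

definition interval_start :: "(nat \<Rightarrow> nat) \<Rightarrow> nat option \<Rightarrow> nat" where
  "interval_start s lo = (case lo of None \<Rightarrow> 0 | Some l \<Rightarrow> Suc (s l))"

definition interval_end :: "'a list \<Rightarrow> (nat \<Rightarrow> nat) \<Rightarrow> nat option \<Rightarrow> nat" where
  "interval_end w s hi = (case hi of None \<Rightarrow> length w | Some h \<Rightarrow> s h)"

lemma fv_relativise: "fv (relativise lo hi f) \<subseteq> fv f \<union> set_option lo \<union> set_option hi"
  by (induction f) (auto simp: in_interval_fo_def split: option.splits)

lemma sat_list_in_interval_fo:
  "s z < length w \<Longrightarrow>
    sat_list w s (in_interval_fo lo hi z) \<longleftrightarrow> interval_start s lo \<le> s z \<and> s z < interval_end w s hi"
  by (auto simp: in_interval_fo_def interval_start_def interval_end_def split: option.splits)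

lemma ex_interval_shift:
  "(a::nat) \<le> b \<Longrightarrow> (\<exists>p. a \<le> p \<and> p < b \<and> P (p - a)) \<longleftrightarrow> (\<exists>q<b - a. P q)"
proof
  assume "\<exists>p. a \<le> p \<and> p < b \<and> P (p - a)"
  then obtain p where p: "a \<le> p" "p < b" "P (p - a)" by blast
  then show "\<exists>q<b - a. P q"
    using diff_less_mono[OF p(2,1)] by blast
next
  assume "\<exists>q<b - a. P q"
  then obtain q where "q < b - a" "P q" by blast
  then show "\<exists>p. a \<le> p \<and> p < b \<and> P (p - a)" by (intro exI[of _ "q + a"]) auto
qed

lemma sat_list_relativise:
  assumes "\<forall>l. lo = Some l \<longrightarrow> l \<notin> bound_vars f" "\<forall>h. hi = Some h \<longrightarrow> h \<notin> bound_vars f"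
    and "interval_start s lo \<le> interval_end w s hi" "interval_end w s hi \<le> length w"
    and "\<forall>v\<in>fv f. interval_start s lo \<le> s v \<and> s v < interval_end w s hi"
  shows "sat_list w s (relativise lo hi f) \<longleftrightarrow>
    sat_list (take (interval_end w s hi - interval_start s lo) (drop (interval_start s lo) w))
      (\<lambda>v. s v - interval_start s lo) f"
  using assms
proof (induction f arbitrary: s)
  case (FEx x f)
  define a b where "a = interval_start s lo" and "b = interval_end w s hi"
  define v where "v = take (b - a) (drop a w)"
  have ab: "interval_start (s(x := p)) lo = a" "interval_end w (s(x := p)) hi = b" for p
    using FEx.prems(1,2) unfolding a_def b_def interval_start_def interval_end_def
    by (auto split: option.splits)
  have body: "sat_list w (s(x := p)) (relativise lo hi f) \<longleftrightarrow>
      sat_list v ((\<lambda>v. s v - a)(x := p - a)) f" if "a \<le> p" "p < b" for p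
  proof -
    have fv_inside: "\<forall>v\<in>fv f. a \<le> (s(x := p)) v \<and> (s(x := p)) v < b"
      using FEx.prems(5) that by (auto simp: a_def b_def)
    have "sat_list w (s(x := p)) (relativise lo hi f) \<longleftrightarrow>
        sat_list (take (interval_end w (s(x := p)) hi - interval_start (s(x := p)) lo)
          (drop (interval_start (s(x := p)) lo) w)) (\<lambda>v. (s(x := p)) v - interval_start (s(x := p)) lo) f"
      by (rule FEx.IH)
        (use FEx.prems(1-4) that fv_inside in \<open>auto simp: ab a_def b_def simp del: fun_upd_apply\<close>)
    moreover have "(\<lambda>v. (s(x := p)) v - a) = (\<lambda>v. s v - a)(x := p - a)"
      by auto
    ultimately show ?thesis
      by (simp only: ab v_def)
  qed
  have guard: "sat_list w (s(x := p)) (in_interval_fo lo hi x) \<longleftrightarrow> a \<le> p \<and> p < b"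
    if "p < length w" for p
    using sat_list_in_interval_fo[of "s(x := p)" x w lo hi] that by (simp add: ab)
  have below_length: "p < length w" if "p < b" for p
    using that FEx.prems(4) unfolding b_def by linarith
  have "sat_list w s (relativise lo hi (FEx x f)) \<longleftrightarrow>
      (\<exists>p<length w. (a \<le> p \<and> p < b) \<and> sat_list w (s(x := p)) (relativise lo hi f))"
    by (simp only: relativise.simps sat_list.simps) (use guard in blast)
  also have "\<dots> \<longleftrightarrow> (\<exists>p. a \<le> p \<and> p < b \<and> sat_list v ((\<lambda>v. s v - a)(x := p - a)) f)"
    using body below_length by blast
  also have "\<dots> \<longleftrightarrow> (\<exists>q<b - a. sat_list v ((\<lambda>v. s v - a)(x := q)) f)"
    using FEx.prems(3) unfolding a_def b_def by (rule ex_interval_shift)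
  also have "\<dots> \<longleftrightarrow> sat_list v (\<lambda>v. s v - a) (FEx x f)"
    using FEx.prems(3,4) unfolding v_def a_def b_def by simp
  finally show ?case
    unfolding v_def a_def b_def .
qed auto

text \<open>The formula to be relativised is shifted so that its
  variables avoid the markers.\<close>

lemma sat_list_relativise_before:
  assumes "fv f = {}" "\<forall>w s. sat_list w s f \<longleftrightarrow> P w" "s x \<le> length w"
  shows "sat_list w s (relativise None (Some x) (shift_fo (Suc x) f)) \<longleftrightarrow> P (take (s x) w)"
proof -
  have "sat_list w s (relativise None (Some x) (shift_fo (Suc x) f)) \<longleftrightarrow>
      sat_list (take (interval_end w s (Some x) - interval_start s None)
        (drop (interval_start s None) w)) (\<lambda>v. s v - interval_start s None) (shift_fo (Suc x) f)"
    by (rule sat_list_relativise)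
      (use assms in \<open>auto simp: bound_vars_shift_fo fv_shift_fo interval_start_def interval_end_def\<close>)
  then show ?thesis
    using assms(2) by (simp add: sat_list_shift_fo interval_start_def interval_end_def)
qed

lemma sat_list_relativise_between:
  assumes "fv f = {}" "\<forall>w s. sat_list w s f \<longleftrightarrow> P w" "l < k" "h < k"
    and "s l < s h" "s h \<le> length w"
  shows "sat_list w s (relativise (Some l) (Some h) (shift_fo k f)) \<longleftrightarrow>
    P (take (s h - Suc (s l)) (drop (Suc (s l)) w))"
proof -
  have "sat_list w s (relativise (Some l) (Some h) (shift_fo k f)) \<longleftrightarrow>
      sat_list (take (interval_end w s (Some h) - interval_start s (Some l))
        (drop (interval_start s (Some l)) w)) (\<lambda>v. s v - interval_start s (Some l)) (shift_fo k f)"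
    by (rule sat_list_relativise)
      (use assms in \<open>auto simp: bound_vars_shift_fo fv_shift_fo interval_start_def interval_end_def\<close>)
  then show ?thesis
    using assms(2) by (simp add: sat_list_shift_fo interval_start_def interval_end_def)
qed

lemma sat_list_relativise_after:
  assumes "fv f = {}" "\<forall>w s. sat_list w s f \<longleftrightarrow> P w" "l < k" "s l < length w"
  shows "sat_list w s (relativise (Some l) None (shift_fo k f)) \<longleftrightarrow> P (drop (Suc (s l)) w)"
proof -
  have "sat_list w s (relativise (Some l) None (shift_fo k f)) \<longleftrightarrow>
      sat_list (take (interval_end w s None - interval_start s (Some l))
        (drop (interval_start s (Some l)) w)) (\<lambda>v. s v - interval_start s (Some l)) (shift_fo k f)"
    by (rule sat_list_relativise)
      (use assms in \<open>auto simp: bound_vars_shift_fo fv_shift_fo interval_start_def interval_end_def\<close>)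
  then show ?thesis
    using assms(2) by (simp add: sat_list_shift_fo interval_start_def interval_end_def)
qed

definition positions :: "'a list \<Rightarrow> 'a \<Rightarrow> nat list" where
  "positions w c = filter (\<lambda>i. w ! i = c) [0..<length w]"

definition occ_rank :: "'a list \<Rightarrow> 'a \<Rightarrow> nat \<Rightarrow> nat" where
  "occ_rank w c p = length (filter (\<lambda>i. w ! i = c) [0..<p])"

lemma upt_split_at: "p < q \<Longrightarrow> [0..<q] = [0..<p] @ p # [Suc p..<q]"
  using upt_add_eq_append[of 0 p "q - p"] upt_conv_Cons[of p q] by simp

lemma occ_rank_less: "p < q \<Longrightarrow> w ! p = c \<Longrightarrow> occ_rank w c p < occ_rank w c q"
  unfolding occ_rank_def by (simp add: upt_split_at)

lemma occ_rank_less_length: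
  "p < length w \<Longrightarrow> w ! p = c \<Longrightarrow> occ_rank w c p < length (positions w c)"
  unfolding occ_rank_def positions_def by (simp add: upt_split_at)

lemma positions_nth_occ_rank:
  "p < length w \<Longrightarrow> w ! p = c \<Longrightarrow> positions w c ! occ_rank w c p = p"
  unfolding occ_rank_def positions_def by (simp add: upt_split_at nth_append)

lemma occ_rank_less_iff:
  assumes "w ! p = c" "w ! q = c"
  shows "occ_rank w c p < occ_rank w c q \<longleftrightarrow> p < q"
  using occ_rank_less[of p q w c] occ_rank_less[of q p w c] assms
  by (cases p q rule: linorder_cases) auto

lemma occ_rank_eq_iff:
  assumes "w ! p = c" "w ! q = c"
  shows "occ_rank w c p = occ_rank w c q \<longleftrightarrow> p = q"
  using occ_rank_less[of p q w c] occ_rank_less[of q p w c] assms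
  by (cases p q rule: linorder_cases) auto

lemma nth_positions:
  assumes "j < length (positions w c)"
  shows "positions w c ! j < length w" "w ! (positions w c ! j) = c"
    and "occ_rank w c (positions w c ! j) = j"
proof -
  have "positions w c ! j \<in> set (positions w c)"
    using assms by simp
  then show p: "positions w c ! j < length w" "w ! (positions w c ! j) = c"
    unfolding positions_def by auto
  have "distinct (positions w c)"
    unfolding positions_def by simp
  from nth_eq_iff_index_eq[OF this occ_rank_less_length[OF p] assms]
  show "occ_rank w c (positions w c ! j) = j"
    using positions_nth_occ_rank[OF p] by simp
qed

lemma ex_occ_rank_iff:
  "(\<exists>p<length w. w ! p = c \<and> P (occ_rank w c p)) \<longleftrightarrow> (\<exists>j<length (positions w c). P j)"
proof
  assume "\<exists>p<length w. w ! p = c \<and> P (occ_rank w c p)"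
  then obtain p where p: "p < length w" "w ! p = c" and "P (occ_rank w c p)" by blast
  with occ_rank_less_length[OF p] show "\<exists>j<length (positions w c). P j" by blast
next
  assume "\<exists>j<length (positions w c). P j"
  then obtain j where j: "j < length (positions w c)" and "P j" by blast
  with nth_positions[OF j] show "\<exists>p<length w. w ! p = c \<and> P (occ_rank w c p)" by metis
qed

text \<open>Substituting, for every letter a, a formula phi a x with free variable x for the atom
  FLetter a x, and restricting all quantifiers to the occurrences of c, turns a formula about
  a word indexed by the occurrences of c into a formula about the underlying word.\<close>

fun subst_letters :: "('a \<Rightarrow> nat \<Rightarrow> 'a fo) \<Rightarrow> 'a \<Rightarrow> 'a fo \<Rightarrow> 'a fo" where
  "subst_letters \<phi> c (FLetter a x) = \<phi> a x"
| "subst_letters \<phi> c (FNeg f) = FNeg (subst_letters \<phi> c f)"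
| "subst_letters \<phi> c (FConj f g) = FConj (subst_letters \<phi> c f) (subst_letters \<phi> c g)"
| "subst_letters \<phi> c (FEx x f) = FEx x (FConj (FLetter c x) (subst_letters \<phi> c f))"
| "subst_letters \<phi> c f = f"

lemma fv_subst_letters:
  "(\<And>a x. fv (\<phi> a x) \<subseteq> {x}) \<Longrightarrow> fv (subst_letters \<phi> c f) \<subseteq> fv f"
  by (induction f) auto

lemma sat_list_subst_letters:
  assumes \<phi>: "\<And>a x s. s x < length w \<Longrightarrow> w ! s x = c \<Longrightarrow>
      sat_list w s (\<phi> a x) \<longleftrightarrow> v ! occ_rank w c (s x) = a"
    and "length v = length (positions w c)"
    and "\<forall>x\<in>fv f. s x < length w \<and> w ! s x = c"
  shows "sat_list w s (subst_letters \<phi> c f) \<longleftrightarrow> sat_list v (\<lambda>x. occ_rank w c (s x)) f"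
  using assms(3)
proof (induction f arbitrary: s)
  case (FLess x y)
  then show ?case using occ_rank_less_iff[of w "s x" c "s y"] by auto
next
  case (FEq x y)
  then show ?case using occ_rank_eq_iff[of w "s x" c "s y"] by auto
next
  case (FLetter a x)
  then show ?case using \<phi>[of s x a] by auto
next
  case (FEx x f)
  have "sat_list w (s(x := p)) (subst_letters \<phi> c f) \<longleftrightarrow>
      sat_list v ((\<lambda>x. occ_rank w c (s x))(x := occ_rank w c p)) f"
    if "p < length w" "w ! p = c" for p
  proof -
    have "\<forall>y\<in>fv f. (s(x := p)) y < length w \<and> w ! (s(x := p)) y = c"
      using FEx.prems that by auto
    then have "sat_list w (s(x := p)) (subst_letters \<phi> c f) \<longleftrightarrow>
        sat_list v (\<lambda>y. occ_rank w c ((s(x := p)) y)) f"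
      by (rule FEx.IH)
    moreover have "(\<lambda>y. occ_rank w c ((s(x := p)) y)) = (\<lambda>y. occ_rank w c (s y))(x := occ_rank w c p)"
      by auto
    ultimately show ?thesis
      by simp
  qed
  then have "sat_list w s (subst_letters \<phi> c (FEx x f)) \<longleftrightarrow>
      (\<exists>p<length w. w ! p = c \<and> sat_list v ((\<lambda>x. occ_rank w c (s x))(x := occ_rank w c p)) f)"
    by auto
  also have "\<dots> \<longleftrightarrow> (\<exists>j<length v. sat_list v ((\<lambda>x. occ_rank w c (s x))(x := j)) f)"
    using ex_occ_rank_iff[where P = "\<lambda>j. sat_list v ((\<lambda>x. occ_rank w c (s x))(x := j)) f"]
    by (simp add: assms(2))
  finally show ?case
    by simp
qed auto

definition block :: "'a list \<Rightarrow> 'a \<Rightarrow> nat \<Rightarrow> 'a list" where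
  "block w c p = takeWhile (\<lambda>x. x \<noteq> c) (drop (Suc p) w)"

definition block_word :: "('a list \<Rightarrow> 'b) \<Rightarrow> 'a \<Rightarrow> 'a list \<Rightarrow> 'b list" where
  "block_word g c w = map (\<lambda>p. g (block w c p)) (positions w c)"

lemma nth_block_word:
  "p < length w \<Longrightarrow> w ! p = c \<Longrightarrow> block_word g c w ! occ_rank w c p = g (block w c p)"
  unfolding block_word_def by (simp add: occ_rank_less_length positions_nth_occ_rank)

definition fo_or :: "'a fo \<Rightarrow> 'a fo \<Rightarrow> 'a fo" where
  "fo_or f g = FNeg (FConj (FNeg f) (FNeg g))"

lemma sat_list_fo_or [simp]: "sat_list w s (fo_or f g) \<longleftrightarrow> sat_list w s f \<or> sat_list w s g"
  unfolding fo_or_def by simp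

lemma fv_fo_or [simp]: "fv (fo_or f g) = fv f \<union> fv g"
  unfolding fo_or_def by simp

definition next_occ_fo :: "'a \<Rightarrow> nat \<Rightarrow> nat \<Rightarrow> nat \<Rightarrow> 'a fo" where
  "next_occ_fo c x y z = FConj (FLetter c y) (FConj (FLess x y)
      (FNeg (FEx z (FConj (FLess x z) (FConj (FLess z y) (FLetter c z))))))"

definition no_occ_after_fo :: "'a \<Rightarrow> nat \<Rightarrow> nat \<Rightarrow> 'a fo" where
  "no_occ_after_fo c x z = FNeg (FEx z (FConj (FLess x z) (FLetter c z)))"

definition block_letter_fo :: "'a \<Rightarrow> ('a \<Rightarrow> 'a fo) \<Rightarrow> 'a \<Rightarrow> nat \<Rightarrow> 'a fo" where
  "block_letter_fo c G a x = fo_or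
     (FEx (x + 1) (FConj (next_occ_fo c x (x + 1) (x + 2))
        (relativise (Some x) (Some (x + 1)) (shift_fo (x + 3) (G a)))))
     (FConj (no_occ_after_fo c x (x + 1)) (relativise (Some x) None (shift_fo (x + 3) (G a))))"

lemma fv_block_letter_fo:
  assumes "\<And>a. fv (G a) = {}" shows "fv (block_letter_fo c G a x) \<subseteq> {x}"
proof -
  have "fv (relativise (Some x) (Some (x + 1)) (shift_fo (x + 3) (G a))) \<subseteq> {x, x + 1}"
    using fv_relativise[of "Some x" "Some (x + 1)" "shift_fo (x + 3) (G a)"] assms
    by (auto simp: fv_shift_fo)
  moreover have "fv (relativise (Some x) None (shift_fo (x + 3) (G a))) \<subseteq> {x}"
    using fv_relativise[of "Some x" None "shift_fo (x + 3) (G a)"] assms by (simp add: fv_shift_fo)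
  ultimately show ?thesis
    unfolding block_letter_fo_def next_occ_fo_def no_occ_after_fo_def by auto
qed

lemma block_before_next_occ:
  assumes "p < q" "q < length w" "w ! q = c" "\<And>z. p < z \<Longrightarrow> z < q \<Longrightarrow> w ! z \<noteq> c"
  shows "block w c p = take (q - Suc p) (drop (Suc p) w)"
  unfolding block_def by (rule takeWhile_eq_take_P_nth) (use assms in auto)

lemma block_without_next_occ:
  assumes "\<And>z. p < z \<Longrightarrow> z < length w \<Longrightarrow> w ! z \<noteq> c"
  shows "block w c p = drop (Suc p) w"
proof -
  have "y \<noteq> c" if y: "y \<in> set (drop (Suc p) w)" for y
  proof -
    obtain i where "i < length (drop (Suc p) w)" "drop (Suc p) w ! i = y"
      using y unfolding in_set_conv_nth by blast
    then show ?thesis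
      using assms[of "Suc p + i"] by auto
  qed
  then show ?thesis
    unfolding block_def by simp
qed

lemma sat_list_block_letter_fo:
  assumes G: "\<And>a. fv (G a) = {}" "\<And>a. \<forall>v s. sat_list v s (G a) \<longleftrightarrow> g v = a"
    and x: "s x < length w"
  shows "sat_list w s (block_letter_fo c G a x) \<longleftrightarrow> g (block w c (s x)) = a"
proof (cases "\<exists>q. s x < q \<and> q < length w \<and> w ! q = c")
  case True
  define q where "q = (LEAST q. s x < q \<and> q < length w \<and> w ! q = c)"
  have q: "s x < q" "q < length w" "w ! q = c"
    using LeastI_ex[OF True] unfolding q_def by auto
  have before_q: "w ! z \<noteq> c" if "s x < z" "z < q" for z
    using not_less_Least[of z] that q(2) unfolding q_def by fastforce
  have next_occ: "sat_list w (s(x + 1 := y)) (next_occ_fo c x (x + 1) (x + 2)) \<longleftrightarrow> y = q"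
    if "y < length w" for y
  proof -
    have "sat_list w (s(x + 1 := y)) (next_occ_fo c x (x + 1) (x + 2)) \<longleftrightarrow>
        w ! y = c \<and> s x < y \<and> (\<forall>z<y. s x < z \<longrightarrow> w ! z \<noteq> c)"
      using that unfolding next_occ_fo_def by auto
    also have "\<dots> \<longleftrightarrow> y = q"
      using q before_q by (cases y q rule: linorder_cases) auto
    finally show ?thesis .
  qed
  have "sat_list w s (block_letter_fo c G a x) \<longleftrightarrow>
      sat_list w (s(x + 1 := q)) (relativise (Some x) (Some (x + 1)) (shift_fo (x + 3) (G a)))"
    using next_occ q unfolding block_letter_fo_def no_occ_after_fo_def by auto
  also have "\<dots> \<longleftrightarrow> g (take (q - Suc (s x)) (drop (Suc (s x)) w)) = a"
    using sat_list_relativise_between[OF G(1) G(2), of x "x + 3" "x + 1" "s(x + 1 := q)" w] q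
    by simp
  finally show ?thesis
    using block_before_next_occ[OF q before_q] by simp
next
  case False
  then have "\<not> sat_list w (s(x + 1 := y)) (next_occ_fo c x (x + 1) (x + 2))" if "y < length w" for y
    using that unfolding next_occ_fo_def by auto
  moreover have "sat_list w s (no_occ_after_fo c x (x + 1))"
    using False unfolding no_occ_after_fo_def by auto
  ultimately have "sat_list w s (block_letter_fo c G a x) \<longleftrightarrow>
      sat_list w s (relativise (Some x) None (shift_fo (x + 3) (G a)))"
    unfolding block_letter_fo_def by auto
  also have "\<dots> \<longleftrightarrow> g (drop (Suc (s x)) w) = a"
    using sat_list_relativise_after[OF G(1) G(2), of x "x + 3" s w] x by simp
  finally show ?thesis
    using block_without_next_occ[of "s x" w c] False by auto
qed

lemma list_definable_block_word:
  fixes g :: "'a list \<Rightarrow> 'a"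
  assumes "\<And>a. list_definable {v. g v = a}" and "list_definable K"
  shows "list_definable {w. block_word g c w \<in> K}"
proof -
  have "\<forall>a. \<exists>f. fv f = {} \<and> (\<forall>v s. sat_list v s f \<longleftrightarrow> g v = a)"
  proof
    fix a
    obtain f where "fv f = {}" "\<forall>v s. sat_list v s f \<longleftrightarrow> v \<in> {v. g v = a}"
      using assms(1) by (rule list_definableE)
    then show "\<exists>f. fv f = {} \<and> (\<forall>v s. sat_list v s f \<longleftrightarrow> g v = a)" by auto
  qed
  from choice[OF this] obtain G
    where G: "\<And>a. fv (G a) = {}" "\<And>a. \<forall>v s. sat_list v s (G a) \<longleftrightarrow> g v = a"
    by blast
  obtain f where f: "fv f = {}" "\<forall>w s. sat_list w s f \<longleftrightarrow> w \<in> K"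
    using assms(2) by (rule list_definableE)
  show ?thesis
  proof (rule list_definableI)
    have "fv (subst_letters (block_letter_fo c G) c f) \<subseteq> fv f"
      by (rule fv_subst_letters) (rule fv_block_letter_fo[OF G(1)])
    with f(1) show "fv (subst_letters (block_letter_fo c G) c f) = {}"
      by blast
  next
    fix w
    have "sat_list w (\<lambda>_. 0) (subst_letters (block_letter_fo c G) c f) \<longleftrightarrow>
        sat_list (block_word g c w) (\<lambda>_. occ_rank w c 0) f"
    proof (rule sat_list_subst_letters)
      fix a and x :: nat and s
      assume x: "s x < length w" "w ! s x = c"
      then show "sat_list w s (block_letter_fo c G a x) \<longleftrightarrow> block_word g c w ! occ_rank w c (s x) = a"
        using sat_list_block_letter_fo[of G g s x w c a, OF G x(1)] nth_block_word[OF x, of g] by simp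
    qed (use f in \<open>auto simp: block_word_def\<close>)
    then show "sat_list w (\<lambda>_. 0) (subst_letters (block_letter_fo c G) c f) \<longleftrightarrow>
        w \<in> {w. block_word g c w \<in> K}"
      using f(2) by simp
  qed
qed

lemma first_occurrence:
  assumes "c \<in> set w"
  defines "p \<equiv> length (takeWhile (\<lambda>x. x \<noteq> c) w)"
  shows "p < length w" and "w ! p = c" and "\<And>z. z < p \<Longrightarrow> w ! z \<noteq> c"
proof -
  have "dropWhile (\<lambda>x. x \<noteq> c) w \<noteq> []"
    using assms by (auto simp: dropWhile_eq_Nil_conv)
  then obtain d where d: "dropWhile (\<lambda>x. x \<noteq> c) w = c # d"
    using hd_dropWhile[of "\<lambda>x. x \<noteq> c" w] by (cases "dropWhile (\<lambda>x. x \<noteq> c) w") auto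
  have w: "takeWhile (\<lambda>x. x \<noteq> c) w @ c # d = w"
    using takeWhile_dropWhile_id[of "\<lambda>x. x \<noteq> c" w] by (simp only: d)
  show "p < length w"
    using arg_cong[OF w, of length] unfolding p_def by simp
  show "w ! p = c"
    using arg_cong[OF w, of "\<lambda>v. v ! p"] unfolding p_def by simp
  show "w ! z \<noteq> c" if "z < p" for z
    using takeWhile_nth[OF that[unfolded p_def]] nth_mem[OF that[unfolded p_def]] set_takeWhileD
    by fastforce
qed

lemma first_occurrence_iff:
  "(\<exists>p<length w. w ! p = c \<and> (\<forall>z<p. w ! z \<noteq> c) \<and> P (take p w)) \<longleftrightarrow>
    c \<in> set w \<and> P (takeWhile (\<lambda>x. x \<noteq> c) w)"
proof
  assume "\<exists>p<length w. w ! p = c \<and> (\<forall>z<p. w ! z \<noteq> c) \<and> P (take p w)"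
  then obtain p where p: "p < length w" "w ! p = c" "\<forall>z<p. w ! z \<noteq> c" "P (take p w)"
    by blast
  have "takeWhile (\<lambda>x. x \<noteq> c) w = take p w"
    by (rule takeWhile_eq_take_P_nth) (use p in auto)
  moreover have "c \<in> set w"
    using nth_mem[OF p(1)] unfolding p(2) .
  ultimately show "c \<in> set w \<and> P (takeWhile (\<lambda>x. x \<noteq> c) w)"
    using p(4) by simp
next
  assume c: "c \<in> set w \<and> P (takeWhile (\<lambda>x. x \<noteq> c) w)"
  define p where "p = length (takeWhile (\<lambda>x. x \<noteq> c) w)"
  have "p < length w" "w ! p = c" "\<forall>z<p. w ! z \<noteq> c"
    using first_occurrence[of c w] c unfolding p_def by auto
  moreover have "P (take p w)"
    using c takeWhile_eq_take[of "\<lambda>x. x \<noteq> c" w] unfolding p_def by simp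
  ultimately show "\<exists>p<length w. w ! p = c \<and> (\<forall>z<p. w ! z \<noteq> c) \<and> P (take p w)"
    by blast
qed

lemma list_definable_before_first:
  assumes "list_definable K"
  shows "list_definable {w. c \<in> set w \<and> takeWhile (\<lambda>x. x \<noteq> c) w \<in> K}"
proof -
  obtain f where f: "fv f = {}" "\<forall>w s. sat_list w s f \<longleftrightarrow> w \<in> K"
    using assms by (rule list_definableE)
  define F where "F = FEx 0 (FConj (FLetter c 0) (FConj (FNeg (FEx 1 (FConj (FLess 1 0) (FLetter c 1))))
    (relativise None (Some 0) (shift_fo 1 f))))"
  show ?thesis
  proof (rule list_definableI)
    show "fv F = {}"
      unfolding F_def using fv_relativise[of None "Some 0" "shift_fo 1 f"] f(1) by (auto simp: fv_shift_fo)
  next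
    fix w
    have "sat_list w ((\<lambda>_. 0)(0 := p)) (relativise None (Some 0) (shift_fo 1 f)) \<longleftrightarrow> take p w \<in> K"
      if "p < length w" for p
      using sat_list_relativise_before[OF f, of "(\<lambda>_. 0)(0 := p)" 0 w] that by simp
    then have "sat_list w (\<lambda>_. 0) F \<longleftrightarrow>
        (\<exists>p<length w. w ! p = c \<and> (\<forall>z<p. w ! z \<noteq> c) \<and> take p w \<in> K)"
      unfolding F_def by (auto simp del: fun_upd_apply) auto
    also have "\<dots> \<longleftrightarrow> c \<in> set w \<and> takeWhile (\<lambda>x. x \<noteq> c) w \<in> K"
      by (rule first_occurrence_iff)
    finally show "sat_list w (\<lambda>_. 0) F \<longleftrightarrow> w \<in> {w. c \<in> set w \<and> takeWhile (\<lambda>x. x \<noteq> c) w \<in> K}"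
      by simp
  qed
qed

lemma list_definable_length_ge: "list_definable {w :: 'a list. n \<le> length w}"
proof (induction n)
  case 0
  then show ?case using list_definable_UNIV by simp
next
  case (Suc n)
  obtain f :: "'a fo" where f: "fv f = {}" "\<forall>w s. sat_list w s f \<longleftrightarrow> w \<in> {w. n \<le> length w}"
    using Suc.IH by (rule list_definableE)
  show ?case
  proof (rule list_definableI[of "FEx 0 (relativise None (Some 0) (shift_fo 1 f))"])
    show "fv (FEx 0 (relativise None (Some 0) (shift_fo 1 f))) = {}"
      using fv_relativise[of None "Some 0" "shift_fo 1 f"] f(1) by (auto simp: fv_shift_fo)
  next
    fix w :: "'a list"
    have "sat_list w ((\<lambda>_. 0)(0 := p)) (relativise None (Some 0) (shift_fo 1 f)) \<longleftrightarrow> n \<le> p"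
      if "p < length w" for p
      using sat_list_relativise_before[OF f, of "(\<lambda>_. 0)(0 := p)" 0 w] that by simp
    then show "sat_list w (\<lambda>_. 0) (FEx 0 (relativise None (Some 0) (shift_fo 1 f))) \<longleftrightarrow>
        w \<in> {w. Suc n \<le> length w}"
      by (auto simp del: fun_upd_apply) (metis Suc_le_lessD le_refl)
  qed
qed

lemma list_definable_length_in: "finite N \<Longrightarrow> list_definable {w. length w \<in> N}"
proof -
  assume "finite N"
  have "list_definable {w. length w = n}" for n
  proof -
    have "{w. length w = n} = {w. n \<le> length w} \<inter> - {w. Suc n \<le> length w}"
      by auto
    then show ?thesis
      by (metis list_definable_Int list_definable_Compl list_definable_length_ge)
  qed
  moreover have "{w. length w \<in> N} = (\<Union>n\<in>N. {w. length w = n})"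
    by auto
  ultimately show ?thesis
    using list_definable_UN[OF \<open>finite N\<close>, of "\<lambda>n. {w. length w = n}"] by metis
qed

fun rev_fo :: "'a fo \<Rightarrow> 'a fo" where
  "rev_fo (FLess x y) = FLess y x"
| "rev_fo (FNeg f) = FNeg (rev_fo f)"
| "rev_fo (FConj f g) = FConj (rev_fo f) (rev_fo g)"
| "rev_fo (FEx x f) = FEx x (rev_fo f)"
| "rev_fo f = f"

lemma fv_rev_fo: "fv (rev_fo f) = fv f"
  by (induction f) auto

lemma ex_less_rev_iff: "(\<exists>p<n. P (n - Suc p)) \<longleftrightarrow> (\<exists>q<n. P (q :: nat))"
proof
  assume "\<exists>p<n. P (n - Suc p)"
  then obtain p where "p < n" "P (n - Suc p)" by blast
  then show "\<exists>q<n. P q" by (intro exI[of _ "n - Suc p"]) auto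
next
  assume "\<exists>q<n. P q"
  then obtain q where "q < n" "P q" by blast
  then show "\<exists>p<n. P (n - Suc p)" by (intro exI[of _ "n - Suc q"]) (auto simp: Suc_diff_Suc)
qed

lemma sat_list_rev_fo:
  "\<forall>v\<in>fv f. s v < length w \<Longrightarrow>
    sat_list w s (rev_fo f) \<longleftrightarrow> sat_list (rev w) (\<lambda>v. length w - Suc (s v)) f"
proof (induction f arbitrary: s)
  case (FLetter a x)
  then show ?case by (auto simp: rev_nth)
next
  case (FEx x f)
  let ?r = "\<lambda>s v. length w - Suc (s v)"
  have "sat_list w (s(x := p)) (rev_fo f) \<longleftrightarrow> sat_list (rev w) ((?r s)(x := length w - Suc p)) f"
    if "p < length w" for p
  proof -
    have "\<forall>v\<in>fv f. (s(x := p)) v < length w"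
      using FEx.prems that by auto
    then have "sat_list w (s(x := p)) (rev_fo f) \<longleftrightarrow> sat_list (rev w) (?r (s(x := p))) f"
      by (rule FEx.IH)
    moreover have "?r (s(x := p)) = (?r s)(x := length w - Suc p)"
      by auto
    ultimately show ?thesis
      by simp
  qed
  then have "sat_list w s (rev_fo (FEx x f)) \<longleftrightarrow>
      (\<exists>p<length w. sat_list (rev w) ((?r s)(x := length w - Suc p)) f)"
    by (auto simp del: fun_upd_apply)
  also have "\<dots> \<longleftrightarrow> (\<exists>q<length w. sat_list (rev w) ((?r s)(x := q)) f)"
    by (rule ex_less_rev_iff)
  finally show ?case
    by simp
qed auto

lemma list_definable_rev: "list_definable K \<Longrightarrow> list_definable {w. rev w \<in> K}"
proof -
  assume "list_definable K"
  then obtain f where f: "fv f = {}" "\<forall>w s. sat_list w s f \<longleftrightarrow> w \<in> K"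
    by (rule list_definableE)
  show ?thesis
  proof (rule list_definableI[of "rev_fo f"])
    show "fv (rev_fo f) = {}"
      using f(1) by (simp add: fv_rev_fo)
    show "sat_list w (\<lambda>_. 0) (rev_fo f) \<longleftrightarrow> w \<in> {w. rev w \<in> K}" for w
      using sat_list_rev_fo[of f "\<lambda>_. 0" w] f by simp
  qed
qed

definition mprod :: "('m \<Rightarrow> 'm \<Rightarrow> 'm) \<Rightarrow> 'm \<Rightarrow> 'm list \<Rightarrow> 'm" where
  "mprod mul one w = foldr mul w one"

lemma mprod_Nil [simp]: "mprod mul one [] = one"
  by (simp add: mprod_def)

lemma mprod_Cons [simp]: "mprod mul one (x # w) = mul x (mprod mul one w)"
  by (simp add: mprod_def)

inductive_set sharp_closure :: "('m \<Rightarrow> 'm \<Rightarrow> 'm) \<Rightarrow> ('m \<Rightarrow> 'm) \<Rightarrow> 'm set \<Rightarrow> 'm set"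
  for mul sh A where
  base: "a \<in> A \<Longrightarrow> a \<in> sharp_closure mul sh A"
| mul: "a \<in> sharp_closure mul sh A \<Longrightarrow> b \<in> sharp_closure mul sh A \<Longrightarrow>
    mul a b \<in> sharp_closure mul sh A"
| sharp: "a \<in> sharp_closure mul sh A \<Longrightarrow> sh a \<in> sharp_closure mul sh A"

lemma sharp_closure_least:
  assumes "A \<subseteq> C" "\<And>a b. a \<in> C \<Longrightarrow> b \<in> C \<Longrightarrow> mul a b \<in> C" "\<And>a. a \<in> C \<Longrightarrow> sh a \<in> C"
  shows "sharp_closure mul sh A \<subseteq> C"
proof
  fix x
  assume "x \<in> sharp_closure mul sh A"
  then show "x \<in> C"
    by (induction rule: sharp_closure.induct) (use assms in auto)
qed

lemma sharp_closure_mono: "A \<subseteq> B \<Longrightarrow> sharp_closure mul sh A \<subseteq> sharp_closure mul sh B"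
  by (rule sharp_closure_least) (auto intro: sharp_closure.intros)

lemma sharp_closure_swap: "sharp_closure (\<lambda>a b. mul b a) sh A = sharp_closure mul sh A"
proof
  show "sharp_closure (\<lambda>a b. mul b a) sh A \<subseteq> sharp_closure mul sh A"
    by (rule sharp_closure_least) (auto intro: sharp_closure.intros)
  show "sharp_closure mul sh A \<subseteq> sharp_closure (\<lambda>a b. mul b a) sh A"
    by (rule sharp_closure_least)
      (auto intro: sharp_closure.base sharp_closure.sharp sharp_closure.mul[of _ "\<lambda>a b. mul b a"])
qed

definition plus_lists :: "'a set \<Rightarrow> 'a list set" where
  "plus_lists A = {w. w \<noteq> [] \<and> set w \<subseteq> A}"

lemma list_definable_plus_lists: "list_definable (plus_lists (A :: 'a::finite set))"
proof -
  have "plus_lists A = {w. 1 \<le> length w} \<inter> {w. set w \<subseteq> A}"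
    unfolding plus_lists_def by (auto simp: Suc_le_eq)
  then show ?thesis
    using list_definable_Int[OF list_definable_length_ge list_definable_lists] by simp
qed

definition list_approximant ::
  "('m \<Rightarrow> 'm \<Rightarrow> bool) \<Rightarrow> ('m \<Rightarrow> 'm \<Rightarrow> 'm) \<Rightarrow> 'm \<Rightarrow> ('m \<Rightarrow> 'm) \<Rightarrow> 'm set \<Rightarrow> ('m list \<Rightarrow> 'm) \<Rightarrow> bool"
where
  "list_approximant le mul one sh A R \<longleftrightarrow>
     (\<forall>w\<in>plus_lists A. le (mprod mul one w) (R w) \<and> R w \<in> sharp_closure mul sh A) \<and>
     (\<forall>m. list_definable {w \<in> plus_lists A. R w = m})"

locale preordered_monoid =
  fixes le :: "'m::finite \<Rightarrow> 'm \<Rightarrow> bool" and mul :: "'m \<Rightarrow> 'm \<Rightarrow> 'm" and one :: 'm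
  assumes refl: "le x x"
    and trans: "le x y \<Longrightarrow> le y z \<Longrightarrow> le x z"
    and assoc: "mul (mul a b) c = mul a (mul b c)"
    and left_unit: "mul one a = a"
    and right_unit: "mul a one = a"
    and mul_mono: "le a a' \<Longrightarrow> le b b' \<Longrightarrow> le (mul a b) (mul a' b')"
begin

abbreviation lprod :: "'m list \<Rightarrow> 'm" where
  "lprod \<equiv> mprod mul one"

abbreviation npow :: "'m \<Rightarrow> nat \<Rightarrow> 'm" where
  "npow a n \<equiv> lprod (replicate n a)"

lemma lprod_append: "lprod (u @ v) = mul (lprod u) (lprod v)"
  by (induction u) (auto simp: left_unit assoc)

lemma lprod_concat: "lprod (concat ws) = lprod (map lprod ws)"
  by (induction ws) (auto simp: lprod_append)

lemma lprod_mono: "list_all2 le u v \<Longrightarrow> le (lprod u) (lprod v)"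
  by (induction rule: list_all2_induct) (auto intro: mul_mono refl)

lemma lprod_swap: "mprod (\<lambda>a b. mul b a) one w = lprod (rev w)"
  by (induction w) (auto simp: lprod_append right_unit)

lemma preordered_monoid_swap: "preordered_monoid le (\<lambda>a b. mul b a) one"
  by unfold_locales (auto simp: refl assoc left_unit right_unit intro: trans mul_mono)

lemma npow_add: "npow a (m + n) = mul (npow a m) (npow a n)"
  by (simp add: replicate_add lprod_append)

lemma npow_Suc_right: "npow a (Suc n) = mul (npow a n) a"
  using npow_add[where m = n and n = 1] by (simp add: right_unit)

lemma npow_mono: "le a b \<Longrightarrow> le (npow a n) (npow b n)"
  by (induction n) (auto intro: mul_mono refl)

lemma npow_idem: "mul e e = e \<Longrightarrow> npow e (Suc n) = e"
  by (induction n) (auto simp: right_unit)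

lemma npow_eventually_periodic: "\<exists>i p. p \<ge> 1 \<and> (\<forall>t\<ge>i. \<forall>k. npow a (t + k * p) = npow a t)"
proof -
  have "\<not> inj_on (npow a) {0..card (UNIV :: 'm set)}"
  proof
    assume "inj_on (npow a) {0..card (UNIV :: 'm set)}"
    then have "card (npow a ` {0..card (UNIV :: 'm set)}) = Suc (card (UNIV :: 'm set))"
      by (simp add: card_image)
    moreover have "card (npow a ` {0..card (UNIV :: 'm set)}) \<le> card (UNIV :: 'm set)"
      by (rule card_mono) auto
    ultimately show False
      by simp
  qed
  then obtain i j where ij: "i < j" "npow a i = npow a j"
    unfolding inj_on_def by (metis atLeastAtMost_iff linorder_neqE_nat)
  define p where "p = j - i"
  have "npow a (t + k * p) = npow a t" if "t \<ge> i" for t k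
  proof (induction k)
    case (Suc k)
    have "npow a (t + Suc k * p) = mul (npow a (t - i)) (mul (npow a (i + p)) (npow a (k * p)))"
      using that by (simp add: npow_add[symmetric] algebra_simps)
    also have "npow a (i + p) = npow a i"
      using ij by (simp add: p_def)
    also have "mul (npow a (t - i)) (mul (npow a i) (npow a (k * p))) = npow a (t + k * p)"
      using that by (simp add: npow_add[symmetric])
    finally show ?case
      using Suc by simp
  qed simp
  moreover have "p \<ge> 1"
    using ij unfolding p_def by simp
  ultimately show ?thesis
    by blast
qed

lemma idempotent_npow: "\<exists>n\<ge>N. n \<ge> 1 \<and> mul (npow a n) (npow a n) = npow a n"
proof -
  obtain i p where p: "p \<ge> 1" and per: "\<And>t k. t \<ge> i \<Longrightarrow> npow a (t + k * p) = npow a t"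
    using npow_eventually_periodic by blast
  define n where "n = p * (N + i + 1)"
  have n: "n \<ge> N" "n \<ge> 1" "n \<ge> i"
    using mult_le_mono1[OF p, of "N + i + 1"] unfolding n_def by simp_all
  have "mul (npow a n) (npow a n) = npow a (n + (N + i + 1) * p)"
    by (simp add: npow_add[symmetric] n_def mult.commute)
  also have "\<dots> = npow a n"
    using per[OF n(3)] .
  finally show ?thesis
    using n by blast
qed

end


text \<open>Only two of the axioms of a merge operation are needed for finite words:
  (ab)# = a(ba)#b, and that a# eventually dominates the powers of a.\<close>

locale monoid_with_merge = preordered_monoid le mul one
  for le :: "'m::finite \<Rightarrow> 'm \<Rightarrow> bool" and mul one +
  fixes sh :: "'m \<Rightarrow> 'm"
  assumes sharp_mul: "sh (mul a b) = mul a (mul (sh (mul b a)) b)"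
    and npow_le_sharp: "\<exists>N. \<forall>n\<ge>N. le (mprod mul one (replicate n a)) (sh a)"
begin

abbreviation cl :: "'m set \<Rightarrow> 'm set" where
  "cl \<equiv> sharp_closure mul sh"

lemma mul_sharp_absorb: "mul a (sh a) = sh a" "mul (sh a) a = sh a"
  using sharp_mul[of a one] sharp_mul[of one a] by (simp_all add: left_unit right_unit)

lemma lprod_mem_cl: "w \<noteq> [] \<Longrightarrow> set w \<subseteq> cl A \<Longrightarrow> lprod w \<in> cl A"
proof (induction w)
  case (Cons x w)
  then show ?case
    by (cases w) (auto simp: right_unit intro: sharp_closure.mul)
qed simp

lemma npow_mem_cl: "a \<in> cl A \<Longrightarrow> npow a (Suc n) \<in> cl A"
  by (rule lprod_mem_cl) auto

lemma monoid_with_merge_swap: "monoid_with_merge le (\<lambda>a b. mul b a) one sh"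
proof unfold_locales
  show "sh (mul b a) = mul (mul b (sh (mul a b))) a" for a b
    using sharp_mul[of b a] by (simp add: assoc)
  show "\<exists>N. \<forall>n\<ge>N. le (mprod (\<lambda>a b. mul b a) one (replicate n a)) (sh a)" for a
    using npow_le_sharp[of a] by (simp add: lprod_swap)
qed (auto simp: refl assoc left_unit right_unit intro: trans mul_mono)

lemma list_approximant_swap:
  assumes "list_approximant le (\<lambda>a b. mul b a) one sh A R"
  shows "list_approximant le mul one sh A (\<lambda>w. R (rev w))"
proof -
  have rev_plus_lists: "rev w \<in> plus_lists A \<longleftrightarrow> w \<in> plus_lists A" for w
    unfolding plus_lists_def by auto
  have "le (lprod w) (R (rev w)) \<and> R (rev w) \<in> cl A" if "w \<in> plus_lists A" for w
  proof -
    have "le (mprod (\<lambda>a b. mul b a) one (rev w)) (R (rev w)) \<and>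
        R (rev w) \<in> sharp_closure (\<lambda>a b. mul b a) sh A"
      using assms that rev_plus_lists[of w] unfolding list_approximant_def by blast
    then show ?thesis
      by (simp add: lprod_swap sharp_closure_swap[of mul])
  qed
  moreover have "list_definable {w \<in> plus_lists A. R (rev w) = m}" for m
  proof -
    have "list_definable {w. rev w \<in> {v \<in> plus_lists A. R v = m}}"
      using assms unfolding list_approximant_def by (blast intro: list_definable_rev)
    moreover have "{w. rev w \<in> {v \<in> plus_lists A. R v = m}} = {w \<in> plus_lists A. R (rev w) = m}"
      using rev_plus_lists by auto
    ultimately show ?thesis
      by simp
  qed
  ultimately show ?thesis
    unfolding list_approximant_def by blast
qed

lemma list_approximant_const:
  assumes "s \<in> cl A" "\<And>w. w \<in> plus_lists A \<Longrightarrow> le (lprod w) s"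
  shows "list_approximant le mul one sh A (\<lambda>_. s)"
proof -
  have "{w \<in> plus_lists A. s = m} = (if s = m then plus_lists A else {})" for m
    by auto
  then show ?thesis
    using assms unfolding list_approximant_def
    by (simp add: list_definable_plus_lists list_definable_empty)
qed

lemma list_approximant_empty: "list_approximant le mul one sh {} R"
  unfolding list_approximant_def plus_lists_def by (simp add: list_definable_empty)

lemma list_approximant_singleton: "\<exists>R. list_approximant le mul one sh {a} R"
proof -
  obtain N where N: "\<And>n. n \<ge> N \<Longrightarrow> le (npow a n) (sh a)"
    using npow_le_sharp by blast
  define R where "R w = (if length w < N then npow a (length w) else sh a)" for w :: "'m list"
  have a: "a \<in> cl {a}"
    by (rule sharp_closure.base) simp
  have word: "w = replicate (length w) a" "length w \<noteq> 0" if "w \<in> plus_lists {a}" for w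
    using that unfolding plus_lists_def by (auto intro!: replicate_length_same[symmetric])
  have "le (lprod w) (R w) \<and> R w \<in> cl {a}" if "w \<in> plus_lists {a}" for w
    using word[OF that] N npow_mem_cl[OF a, of "length w - 1"] sharp_closure.sharp[OF a] refl
    unfolding R_def by (metis Suc_pred' not_gr_zero not_less)
  moreover have "list_definable {w \<in> plus_lists {a}. R w = m}" for m
  proof -
    define Z where "Z = {n. n < N \<and> npow a n = m}"
    have eq: "{w \<in> plus_lists {a}. R w = m} = plus_lists {a} \<inter>
        ({w. length w \<in> Z} \<union> (if sh a = m then {w. N \<le> length w} else {}))"
      unfolding R_def Z_def by auto
    show ?thesis
      unfolding eq
      by (intro list_definable_Int list_definable_Un list_definable_plus_lists list_definable_length_in)
        (auto simp: Z_def intro: list_definable_length_ge list_definable_empty)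
  qed
  ultimately show ?thesis
    unfolding list_approximant_def by blast
qed

lemma sharp_closure_left_coset:
  assumes "c \<in> cl A" "T \<subseteq> insert c (mul c ` cl A)"
  shows "cl T \<subseteq> insert c (mul c ` cl A)"
proof (rule sharp_closure_least[OF assms(2)])
  have coset: "\<exists>x. a = mul c x \<and> (x = one \<or> x \<in> cl A)" if "a \<in> insert c (mul c ` cl A)" for a
    using that right_unit[of c] by (metis image_iff insert_iff)
  have mul_cl: "mul x y \<in> cl A" if "x = one \<or> x \<in> cl A" "y \<in> cl A" for x y
    using that by (auto simp: left_unit intro: sharp_closure.mul)
  show "mul a b \<in> insert c (mul c ` cl A)"
    if ab: "a \<in> insert c (mul c ` cl A)" "b \<in> insert c (mul c ` cl A)" for a b
  proof -
    obtain x y where "a = mul c x" "x = one \<or> x \<in> cl A" "b = mul c y" "y = one \<or> y \<in> cl A"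
      using coset[OF ab(1)] coset[OF ab(2)] by blast
    moreover have "mul c y \<in> cl A"
      using mul_cl[of c y] \<open>y = one \<or> y \<in> cl A\<close> assms(1) by (auto simp: right_unit)
    ultimately show ?thesis
      using mul_cl[of x "mul c y"] by (simp add: assoc)
  qed
  show "sh a \<in> insert c (mul c ` cl A)" if a: "a \<in> insert c (mul c ` cl A)" for a
  proof -
    obtain x where x: "a = mul c x" "x = one \<or> x \<in> cl A"
      using coset[OF a] by blast
    then have "sh a = mul c (mul (sh (mul x c)) x)"
      using sharp_mul[of c x] by simp
    moreover have "mul (sh (mul x c)) x \<in> cl A" if "x \<in> cl A"
      using that assms(1) by (intro sharp_closure.mul sharp_closure.sharp)
    moreover have "mul (sh (mul x c)) x \<in> cl A" if "x = one"
      using that assms(1) by (simp add: left_unit right_unit sharp_closure.sharp)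
    ultimately show ?thesis
      using x(2) by blast
  qed
qed

end

context preordered_monoid
begin

lemma square_factor_iterate:
  assumes "a = mul (mul a a) p"
  shows "a = mul (npow a (Suc k)) (npow p k)"
proof (induction k)
  case 0
  then show ?case
    by (simp add: right_unit)
next
  case (Suc k)
  have "a = mul (npow a (Suc k)) (npow p k)"
    by (rule Suc.IH)
  also have "npow a (Suc k) = mul (npow a k) (mul (mul a a) p)"
    using npow_Suc_right[where a = a and n = k] assms by simp
  also have "mul (mul (npow a k) (mul (mul a a) p)) (npow p k) =
      mul (mul (mul (npow a k) a) a) (mul p (npow p k))"
    by (simp only: assoc)
  also have "\<dots> = mul (npow a (Suc (Suc k))) (npow p (Suc k))"
    by (simp only: npow_Suc_right[symmetric]) simp
  finally show ?case .
qed

lemma idempotent_power_absorbs_left: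
  assumes "a = mul (mul a a) p" and idem: "mul (npow a (Suc n)) (npow a (Suc n)) = npow a (Suc n)"
  shows "mul (npow a (Suc n)) a = a"
proof -
  define e q where "e = npow a (Suc n)" and "q = npow p (Suc n)"
  have "a = mul (npow a (Suc (Suc n))) q"
    unfolding q_def by (rule square_factor_iterate[OF assms(1)])
  then have a: "a = mul (mul e a) q"
    unfolding e_def by (simp only: npow_Suc_right[where a = a and n = "Suc n"])
  then have "mul e a = mul e (mul (mul e a) q)"
    by (rule arg_cong)
  also have "\<dots> = mul (mul (mul e e) a) q"
    by (simp only: assoc)
  also have "\<dots> = a"
    using idem a[symmetric] unfolding e_def by simp
  finally show ?thesis
    unfolding e_def .
qed

lemma idempotent_power_absorbs_right:
  assumes "a = mul p (mul a a)" "mul (npow a (Suc n)) (npow a (Suc n)) = npow a (Suc n)"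
  shows "mul a (npow a (Suc n)) = a"
proof -
  interpret swapped: preordered_monoid le "\<lambda>a b. mul b a" one
    by (rule preordered_monoid_swap)
  have "mprod (\<lambda>a b. mul b a) one (replicate m a) = npow a m" for m
    by (simp add: lprod_swap)
  from swapped.idempotent_power_absorbs_left[of a p n, unfolded this] assms
  show ?thesis
    by blast
qed

end

context monoid_with_merge
begin

lemma idempotent_power_below_sharp:
  "\<exists>n. mul (npow a (Suc n)) (npow a (Suc n)) = npow a (Suc n) \<and> le (npow a (Suc n)) (sh a)"
proof -
  obtain N where N: "\<And>n. n \<ge> N \<Longrightarrow> le (npow a n) (sh a)"
    using npow_le_sharp by blast
  obtain n where n: "n \<ge> N" "n \<ge> 1" "mul (npow a n) (npow a n) = npow a n"
    using idempotent_npow by blast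
  then obtain m where "n = Suc m"
    by (cases n) auto
  with n N[OF n(1)] show ?thesis
    by blast
qed

lemma square_factor_of_left_coset:
  assumes "a \<in> A" "b \<in> A" "a \<noteq> b"
    and left: "\<And>c. c \<in> A \<Longrightarrow> insert c (mul c ` cl A) = cl A"
  shows "\<exists>p. a = mul (mul a a) p"
proof -
  have in_coset: "x \<in> insert c (mul c ` cl A)" if "c \<in> A" "x \<in> A" for c x
    by (subst left[OF that(1)]) (rule sharp_closure.base[OF that(2)])
  obtain x where x: "x \<in> cl A" "a = mul b x"
    using in_coset[OF assms(2,1)] assms(3) by blast
  obtain y where y: "y \<in> cl A" "b = mul a y"
    using in_coset[OF assms(1,2)] assms(3) by blast
  have a: "a = mul a (mul y x)"
    using x y by (simp add: assoc)
  have "mul y x \<in> insert a (mul a ` cl A)"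
    unfolding left[OF assms(1)] using y(1) x(1) by (rule sharp_closure.mul)
  then consider "mul y x = a" | z where "mul y x = mul a z"
    by blast
  then show ?thesis
  proof cases
    case 1
    then show ?thesis
      using a right_unit by metis
  next
    case 2
    then show ?thesis
      using a by (metis assoc)
  qed
qed

lemma square_factor_of_right_coset:
  assumes "a \<in> A" "b \<in> A" "a \<noteq> b"
    and right: "\<And>c. c \<in> A \<Longrightarrow> insert c ((\<lambda>s. mul s c) ` cl A) = cl A"
  shows "\<exists>q. a = mul q (mul a a)"
proof -
  interpret swapped: monoid_with_merge le "\<lambda>a b. mul b a" one sh
    by (rule monoid_with_merge_swap)
  show ?thesis
    using swapped.square_factor_of_left_coset[OF assms(1-3)] right
    by (simp add: sharp_closure_swap[of mul] assoc)
qed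

lemma common_neutral_idempotent:
  assumes "card A \<ge> 2"
    and left: "\<And>c. c \<in> A \<Longrightarrow> insert c (mul c ` cl A) = cl A"
    and right: "\<And>c. c \<in> A \<Longrightarrow> insert c ((\<lambda>s. mul s c) ` cl A) = cl A"
  shows "\<exists>e. mul e e = e \<and> (\<forall>x\<in>A. mul e x = x \<and> mul x e = x \<and> le e (sh x))"
proof -
  have "\<forall>x. \<exists>n. mul (npow x (Suc n)) (npow x (Suc n)) = npow x (Suc n) \<and> le (npow x (Suc n)) (sh x)"
    using idempotent_power_below_sharp by blast
  from choice[OF this] obtain n where
    n: "\<forall>x. mul (npow x (Suc (n x))) (npow x (Suc (n x))) = npow x (Suc (n x)) \<and>
      le (npow x (Suc (n x))) (sh x)"
    by blast
  define idem where "idem x = npow x (Suc (n x))" for x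
  have idem: "mul (idem x) (idem x) = idem x" "le (idem x) (sh x)" for x
    using n unfolding idem_def by auto
  have other: "\<exists>b\<in>A. b \<noteq> a" for a
  proof (rule ccontr)
    assume "\<not> (\<exists>b\<in>A. b \<noteq> a)"
    then have "card A \<le> card {a}"
      by (intro card_mono) auto
    with assms(1) show False
      by simp
  qed
  have coset: "x \<in> insert y (mul y ` cl A)" "x \<in> insert y ((\<lambda>s. mul s y) ` cl A)"
    if "x \<in> A" "y \<in> A" for x y
    by (subst left[OF that(2)] right[OF that(2)], rule sharp_closure.base[OF that(1)])+
  have absorb: "mul (idem x) x = x" "mul x (idem x) = x" if x: "x \<in> A" for x
  proof -
    obtain b where b: "b \<in> A" "x \<noteq> b"
      using other by metis
    obtain p q where "x = mul (mul x x) p" "x = mul q (mul x x)"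
      using square_factor_of_left_coset[OF x b left] square_factor_of_right_coset[OF x b right]
      by blast
    then show "mul (idem x) x = x" "mul x (idem x) = x"
      using idempotent_power_absorbs_left idempotent_power_absorbs_right idem(1)
      unfolding idem_def by blast+
  qed
  have neutral: "mul (idem y) x = x" "mul x (idem y) = x" if xy: "x \<in> A" "y \<in> A" for x y
  proof -
    show "mul (idem y) x = x"
    proof (cases "x = y")
      case False
      then obtain z where "x = mul y z"
        using coset(1)[OF xy] by blast
      then show ?thesis
        using absorb(1)[OF xy(2)] by (simp add: assoc[symmetric])
    qed (use absorb xy in simp)
    show "mul x (idem y) = x"
    proof (cases "x = y")
      case False
      then obtain z where "x = mul z y"
        using coset(2)[OF xy] by blast
      then show ?thesis
        using absorb(2)[OF xy(2)] by (simp add: assoc)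
    qed (use absorb xy in simp)
  qed
  have same: "idem x = idem y" if xy: "x \<in> A" "y \<in> A" for x y
  proof -
    have "mul (idem y) (idem x) = idem x"
      using neutral(1)[OF xy] unfolding idem_def[of x] by (simp add: assoc[symmetric])
    moreover have "mul (idem y) (idem x) = idem y"
      using neutral(2)[OF xy(2,1)] unfolding idem_def[of y] npow_Suc_right by (simp add: assoc)
    ultimately show ?thesis
      by simp
  qed
  obtain a where a: "a \<in> A"
    using other by blast
  have "mul (idem a) x = x \<and> mul x (idem a) = x \<and> le (idem a) (sh x)" if "x \<in> A" for x
    using neutral[OF that a] idem(2)[of x] same[OF that a] by simp
  with idem(1) show ?thesis
    by blast
qed

end

context preordered_monoid
begin

definition upper_local :: "'m \<Rightarrow> 'm set" where
  "upper_local e = {f. mul e f = f \<and> mul f e = f \<and> le e f}"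

lemma mul_mem_upper_local:
  assumes "mul e e = e" "f \<in> upper_local e" "g \<in> upper_local e"
  shows "mul f g \<in> upper_local e" "le f (mul f g)" "le g (mul f g)"
proof -
  have f: "mul e f = f" "mul f e = f" "le e f" and g: "mul e g = g" "mul g e = g" "le e g"
    using assms(2,3) unfolding upper_local_def by auto
  have "mul e (mul f g) = mul f g" "mul (mul f g) e = mul f g"
    using f(1) g(2) by (simp_all add: assoc[symmetric] assoc)
  moreover have "le e (mul f g)"
    using mul_mono[OF f(3) g(3)] assms(1) by simp
  ultimately show "mul f g \<in> upper_local e"
    unfolding upper_local_def by simp
  show "le f (mul f g)"
    using mul_mono[OF refl[of f] g(3)] f(2) by simp
  show "le g (mul f g)"
    using mul_mono[OF f(3) refl[of g]] g(1) by simp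
qed

lemma lprod_mem_upper_local:
  assumes "mul e e = e" "L \<noteq> []" "set L \<subseteq> upper_local e"
  shows "lprod L \<in> upper_local e" "\<And>f. f \<in> set L \<Longrightarrow> le f (lprod L)"
proof -
  have "lprod L \<in> upper_local e \<and> (\<forall>f\<in>set L. le f (lprod L))"
    using assms(2,3)
  proof (induction L)
    case (Cons f L)
    show ?case
    proof (cases "L = []")
      case True
      then show ?thesis
        using Cons.prems by (simp add: right_unit refl)
    next
      case False
      then have "lprod L \<in> upper_local e" "\<forall>g\<in>set L. le g (lprod L)"
        using Cons by auto
      then show ?thesis
        using mul_mem_upper_local[OF assms(1), of f "lprod L"] Cons.prems by (auto intro: trans)
    qed
  qed simp
  then show "lprod L \<in> upper_local e" "\<And>f. f \<in> set L \<Longrightarrow> le f (lprod L)"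
    by auto
qed

end

context monoid_with_merge
begin

text \<open>With an idempotent e neutral for A and below every a#, the product E of all a#
  dominates every letter, and E^n \<le> E^n e \<le> E^(n+N) \<le> E# bounds every word.\<close>

lemma sharp_bound_of_neutral_idempotent:
  assumes "A \<noteq> {}" "mul e e = e" and neutral: "\<forall>x\<in>A. mul e x = x \<and> mul x e = x \<and> le e (sh x)"
  shows "\<exists>s\<in>cl A. \<forall>w\<in>plus_lists A. le (lprod w) s"
proof -
  have sharp_upper: "sh x \<in> upper_local e" if "x \<in> A" for x
  proof -
    have x: "mul e x = x" "mul x e = x" "le e (sh x)"
      using neutral that by auto
    have "mul e (sh x) = mul (mul e x) (sh x)"
      by (subst mul_sharp_absorb(1)[symmetric]) (rule assoc[symmetric])
    moreover have "mul (sh x) e = mul (sh x) (mul x e)"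
      by (subst mul_sharp_absorb(2)[symmetric]) (rule assoc)
    ultimately show ?thesis
      using x mul_sharp_absorb[of x] unfolding upper_local_def by simp
  qed
  have le_sharp: "le x (sh x)" if "x \<in> A" for x
    using mul_mono[OF bspec[OF neutral that, THEN conjunct2, THEN conjunct2] refl[of x]]
      neutral that mul_sharp_absorb(2)[of x] by simp
  obtain as where as: "set as = A"
    using finite_list[of A] by auto
  define E where "E = lprod (map sh as)"
  have E: "E \<in> upper_local e" "\<And>x. x \<in> A \<Longrightarrow> le (sh x) E"
    using lprod_mem_upper_local[OF assms(2), of "map sh as"] as assms(1) sharp_upper
    unfolding E_def by auto
  have word_le: "le (lprod w) (npow E (length w))" if "set w \<subseteq> A" for w
    using that by (induction w) (auto intro: mul_mono trans[OF le_sharp E(2)] refl)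
  obtain N where N: "\<And>n. n \<ge> N \<Longrightarrow> le (npow E n) (sh E)"
    using npow_le_sharp by blast
  have power_le: "le (npow E (Suc n)) (sh E)" for n
  proof -
    have "le e (npow E (Suc N))"
      using npow_mono[of e E "Suc N"] npow_idem[OF assms(2), of N] E(1)
      unfolding upper_local_def by simp
    then have "le (mul (npow E (Suc n)) e) (mul (npow E (Suc n)) (npow E (Suc N)))"
      by (rule mul_mono[OF refl])
    then have "le (mul (npow E (Suc n)) e) (npow E (Suc n + Suc N))"
      by (simp only: npow_add)
    moreover have "mul E e = E"
      using E(1) unfolding upper_local_def by simp
    then have "mul (npow E (Suc n)) e = npow E (Suc n)"
      by (simp only: npow_Suc_right assoc)
    ultimately show ?thesis
      using N[of "Suc n + Suc N"] by (auto intro: trans)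
  qed
  have "E \<in> cl A"
    unfolding E_def using as assms(1) by (intro lprod_mem_cl) (auto intro: sharp_closure.intros)
  moreover have "le (lprod w) (sh E)" if w: "w \<in> plus_lists A" for w
  proof -
    obtain n where n: "length w = Suc n" and "set w \<subseteq> A"
      using w unfolding plus_lists_def by (cases w) auto
    then show ?thesis
      using trans[OF word_le[of w, unfolded n] power_le[of n]] by blast
  qed
  ultimately show ?thesis
    by (blast intro: sharp_closure.sharp)
qed

lemma list_approximant_without_reduction:
  assumes "card A \<ge> 2"
    and "\<And>c. c \<in> A \<Longrightarrow> insert c (mul c ` cl A) = cl A"
    and "\<And>c. c \<in> A \<Longrightarrow> insert c ((\<lambda>s. mul s c) ` cl A) = cl A"
  shows "\<exists>R. list_approximant le mul one sh A R"
proof -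
  obtain e where e: "mul e e = e" "\<forall>x\<in>A. mul e x = x \<and> mul x e = x \<and> le e (sh x)"
    using common_neutral_idempotent[OF assms] by blast
  have "A \<noteq> {}"
    using assms(1) by (metis card.empty not_numeral_le_zero)
  then obtain s where "s \<in> cl A" "\<forall>w\<in>plus_lists A. le (lprod w) s"
    using sharp_bound_of_neutral_idempotent[OF _ e] by blast
  then show ?thesis
    using list_approximant_const by blast
qed

end

lemma positions_Cons:
  "positions (x # u) c = (if x = c then 0 # map Suc (positions u c) else map Suc (positions u c))"
proof -
  have "[0..<Suc (length u)] = 0 # [Suc 0..<Suc (length u)]"
    by (rule upt_conv_Cons) simp
  then have "[0..<length (x # u)] = 0 # map Suc [0..<length u]"
    by (simp add: map_Suc_upt)
  then show ?thesis
    unfolding positions_def by (simp add: filter_map comp_def)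
qed

lemma prefix_blocks_decomposition:
  "takeWhile (\<lambda>x. x \<noteq> c) u @ concat (map (\<lambda>p. c # block u c p) (positions u c)) = u"
proof (induction u)
  case Nil
  then show ?case
    by (simp add: positions_def)
next
  case (Cons x u)
  have "(\<lambda>p. c # block (x # u) c p) \<circ> Suc = (\<lambda>p. c # block u c p)"
    by (simp add: fun_eq_iff block_def)
  with Cons.IH show ?case
    by (simp add: positions_Cons block_def)
qed

lemma set_block: "set (block u c p) \<subseteq> set u - {c}"
  unfolding block_def by (auto dest: set_takeWhileD in_set_dropD)

lemma positions_eq_Nil_iff: "positions u c = [] \<longleftrightarrow> c \<notin> set u"
  unfolding positions_def by (auto simp: in_set_conv_nth filter_empty_conv)

text \<open>A word u over A is cut at the occurrences of c into u0 c u1 ... c uk with no c in the ui.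
  The prefix u0 is approximated by RB, each block c ui by c RB(ui), and the word formed by
  these block values, whose letters lie in c Cl(A) \<union> {c}, by RT.\<close>

locale block_decomposition = monoid_with_merge le mul one sh
  for le :: "'m::finite \<Rightarrow> 'm \<Rightarrow> bool" and mul one sh +
  fixes A :: "'m set" and c :: 'm and RB RT :: "'m list \<Rightarrow> 'm"
  assumes letter: "c \<in> A"
    and RB: "list_approximant le mul one sh (A - {c}) RB"
    and RT: "list_approximant le mul one sh (insert c (mul c ` RB ` plus_lists (A - {c}))) RT"
begin

definition block_value :: "'m list \<Rightarrow> 'm" where
  "block_value v = (if v \<in> plus_lists (A - {c}) then mul c (RB v) else c)"

definition prefix :: "'m list \<Rightarrow> 'm list" where
  "prefix u = takeWhile (\<lambda>x. x \<noteq> c) u"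

definition approximant :: "'m list \<Rightarrow> 'm" where
  "approximant u =
    (if c \<notin> set u then RB u
     else if prefix u = [] then RT (block_word block_value c u)
     else mul (RB (prefix u)) (RT (block_word block_value c u)))"

lemma RB_sound: "v \<in> plus_lists (A - {c}) \<Longrightarrow> le (lprod v) (RB v) \<and> RB v \<in> cl A"
  using RB sharp_closure_mono[of "A - {c}" A mul sh] unfolding list_approximant_def by blast

lemma RT_sound:
  assumes "t \<in> plus_lists (insert c (mul c ` RB ` plus_lists (A - {c})))"
  shows "le (lprod t) (RT t) \<and> RT t \<in> cl A"
proof -
  have c: "c \<in> cl A"
    using letter by (rule sharp_closure.base)
  have "insert c (mul c ` RB ` plus_lists (A - {c})) \<subseteq> insert c (mul c ` cl A)"
    using RB_sound by auto
  then have "cl (insert c (mul c ` RB ` plus_lists (A - {c}))) \<subseteq> insert c (mul c ` cl A)"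
    by (rule sharp_closure_left_coset[OF c])
  moreover have "insert c (mul c ` cl A) \<subseteq> cl A"
    using c by (auto intro: sharp_closure.mul)
  ultimately show ?thesis
    using RT assms unfolding list_approximant_def by blast
qed

lemma block_word_mem:
  "c \<in> set u \<Longrightarrow> block_word block_value c u \<in> plus_lists (insert c (mul c ` RB ` plus_lists (A - {c})))"
  unfolding block_word_def plus_lists_def block_value_def
  using positions_eq_Nil_iff[of u c] by auto

lemma lprod_decomposition:
  "lprod u = mul (lprod (prefix u)) (lprod (map (\<lambda>p. mul c (lprod (block u c p))) (positions u c)))"
proof -
  have "lprod u = lprod (prefix u @ concat (map (\<lambda>p. c # block u c p) (positions u c)))"
    unfolding prefix_def prefix_blocks_decomposition ..
  then show ?thesis
    by (simp add: lprod_append lprod_concat comp_def)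
qed

lemma approximant_sound:
  assumes u: "u \<in> plus_lists A"
  shows "le (lprod u) (approximant u) \<and> approximant u \<in> cl A"
proof (cases "c \<in> set u")
  case False
  then have "u \<in> plus_lists (A - {c})"
    using u unfolding plus_lists_def by auto
  then show ?thesis
    using RB_sound False unfolding approximant_def by simp
next
  case True
  have blocks: "list_all2 le (map (\<lambda>p. mul c (lprod (block u c p))) (positions u c))
      (block_word block_value c u)"
    unfolding block_word_def list_all2_map1 list_all2_map2
  proof (rule list_all2_refl)
    fix p
    have "set (block u c p) \<subseteq> A - {c}"
      using set_block[of u c p] u unfolding plus_lists_def by auto
    then show "le (mul c (lprod (block u c p))) (block_value (block u c p))"
      using RB_sound unfolding block_value_def plus_lists_def
      by (auto simp: right_unit refl intro: mul_mono)
  qed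
  have T: "le (lprod (map (\<lambda>p. mul c (lprod (block u c p))) (positions u c)))
      (RT (block_word block_value c u))" "RT (block_word block_value c u) \<in> cl A"
    using RT_sound[OF block_word_mem[OF True]] trans[OF lprod_mono[OF blocks]] by auto
  show ?thesis
  proof (cases "prefix u = []")
    case True
    then show ?thesis
      using T \<open>c \<in> set u\<close> lprod_decomposition[of u] unfolding approximant_def by (simp add: left_unit)
  next
    case False
    then have "prefix u \<in> plus_lists (A - {c})"
      using u set_takeWhileD[of _ "\<lambda>x. x \<noteq> c" u] unfolding prefix_def plus_lists_def by auto
    then show ?thesis
      using T RB_sound False \<open>c \<in> set u\<close> lprod_decomposition[of u] unfolding approximant_def
      by (auto intro: mul_mono sharp_closure.mul)
  qed
qed

lemma approximant_definable: "list_definable {u \<in> plus_lists A. approximant u = m}"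
proof -
  let ?T = "insert c (mul c ` RB ` plus_lists (A - {c}))"
  have RB_def: "list_definable {v \<in> plus_lists (A - {c}). RB v = x}" for x
    using RB unfolding list_approximant_def by blast
  have RT_def: "list_definable {v \<in> plus_lists ?T. RT v = x}" for x
    using RT unfolding list_approximant_def by blast
  have block_value_def': "list_definable {v. block_value v = a}" for a
  proof -
    have "{v. block_value v = a} = (\<Union>x\<in>{x. mul c x = a}. {v \<in> plus_lists (A - {c}). RB v = x}) \<union>
        (if a = c then - plus_lists (A - {c}) else {})"
      unfolding block_value_def by auto
    then show ?thesis
      by (simp add: list_definable_Un list_definable_UN RB_def list_definable_Compl
          list_definable_plus_lists list_definable_empty)
  qed
  have blocks: "list_definable {u. block_word block_value c u \<in> {v \<in> plus_lists ?T. RT v = x}}" for x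
    by (rule list_definable_block_word[OF block_value_def' RT_def])
  have prefix: "list_definable {u. c \<in> set u \<and> prefix u \<in> K}" if "list_definable K" for K
    unfolding prefix_def by (rule list_definable_before_first[OF that])
  define L1 where "L1 = plus_lists A \<inter> - {u. c \<in> set u} \<inter> {v \<in> plus_lists (A - {c}). RB v = m}"
  define L2 where "L2 = plus_lists A \<inter> {u. c \<in> set u \<and> prefix u \<in> {v. length v \<in> {0}}} \<inter>
    {u. block_word block_value c u \<in> {v \<in> plus_lists ?T. RT v = m}}"
  define L3 where "L3 = (\<Union>xy\<in>{xy. mul (fst xy) (snd xy) = m}. plus_lists A \<inter>
    {u. c \<in> set u \<and> prefix u \<in> {v \<in> plus_lists (A - {c}). RB v = fst xy}} \<inter>
    {u. block_word block_value c u \<in> {v \<in> plus_lists ?T. RT v = snd xy}})"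
  have "list_definable (L1 \<union> L2 \<union> L3)"
    unfolding L1_def L2_def L3_def
    by (intro list_definable_Un list_definable_Int list_definable_UN list_definable_plus_lists
        list_definable_Compl list_definable_occurs prefix blocks RB_def list_definable_length_in) simp_all
  moreover have "u \<in> {u \<in> plus_lists A. approximant u = m} \<longleftrightarrow> u \<in> L1 \<union> L2 \<union> L3" for u
  proof (cases "u \<in> plus_lists A")
    case False
    then show ?thesis
      unfolding L1_def L2_def L3_def by auto
  next
    case u: True
    consider (no_c) "c \<notin> set u" | (no_prefix) "c \<in> set u" "prefix u = []"
      | (prefix) "c \<in> set u" "prefix u \<noteq> []"
      by blast
    then show ?thesis
    proof cases
      case no_c
      then have "u \<in> plus_lists (A - {c})"
        using u unfolding plus_lists_def by auto
      then show ?thesis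
        using no_c u unfolding L1_def L2_def L3_def approximant_def by auto
    next
      case no_prefix
      have "[] \<notin> plus_lists (A - {c})"
        unfolding plus_lists_def by simp
      then show ?thesis
        using no_prefix u block_word_mem[OF no_prefix(1)]
        unfolding L1_def L2_def L3_def approximant_def by auto
    next
      case prefix
      then have "prefix u \<in> plus_lists (A - {c})"
        using u set_takeWhileD[of _ "\<lambda>x. x \<noteq> c" u] unfolding prefix_def plus_lists_def by auto
      then show ?thesis
        using prefix u block_word_mem[OF prefix(1)]
        unfolding L1_def L2_def L3_def approximant_def by auto
    qed
  qed
  ultimately show ?thesis
    by (metis (no_types, lifting) set_eqI)
qed

lemma list_approximant_block_decomposition: "list_approximant le mul one sh A approximant"
  unfolding list_approximant_def using approximant_sound approximant_definable by blast

end

context monoid_with_merge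
begin

lemma list_approximant_left_reduction:
  assumes "c \<in> A" "\<exists>R. list_approximant le mul one sh (A - {c}) R"
    and "\<And>T. T \<subseteq> insert c (mul c ` cl A) \<Longrightarrow> \<exists>R. list_approximant le mul one sh T R"
  shows "\<exists>R. list_approximant le mul one sh A R"
proof -
  obtain RB where RB: "list_approximant le mul one sh (A - {c}) RB"
    using assms(2) by blast
  have "RB v \<in> cl A" if "v \<in> plus_lists (A - {c})" for v
    using RB that sharp_closure_mono[of "A - {c}" A mul sh]
    unfolding list_approximant_def by blast
  then obtain RT where "list_approximant le mul one sh (insert c (mul c ` RB ` plus_lists (A - {c}))) RT"
    using assms(3)[of "insert c (mul c ` RB ` plus_lists (A - {c}))"] by blast
  then interpret block_decomposition le mul one sh A c RB RT
    using assms(1) RB by unfold_locales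
  show ?thesis
    using list_approximant_block_decomposition by blast
qed

text \<open>Induction on the size of Cl(A), then on the size of A. A letter c whose left (or right)
  multiples together with c form a proper subset of Cl(A) allows a block decomposition; if
  there is no such letter, a constant approximant works.\<close>

theorem list_approximant_exists: "\<exists>R. list_approximant le mul one sh A R"
proof (induction A rule: wf_induct_rule[OF wf_inv_image[OF wf_lex_prod[OF wf_less_than wf_less_than],
      of "\<lambda>A. (card (cl A), card A)"]])
  case (1 A)
  have IH: "\<exists>R. list_approximant le mul one sh A' R"
    if "card (cl A') < card (cl A) \<or> card (cl A') = card (cl A) \<and> card A' < card A" for A'
    using 1 that by simp
  have smaller_letters: "\<exists>R. list_approximant le mul one sh (A - {c}) R" if "c \<in> A" for c
  proof (rule IH)
    have "card (cl (A - {c})) \<le> card (cl A)"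
      by (intro card_mono sharp_closure_mono) auto
    moreover have "card (A - {c}) < card A"
      using that by (intro card_Diff1_less) auto
    ultimately show "card (cl (A - {c})) < card (cl A) \<or>
        card (cl (A - {c})) = card (cl A) \<and> card (A - {c}) < card A"
      by linarith
  qed
  have smaller_closure: "\<exists>R. list_approximant le mul one sh T R"
    if "card C < card (cl A)" "cl T \<subseteq> C" for T C
    using IH card_mono[OF _ that(2)] that(1) by fastforce
  consider "card A < 2"
    | (left) c where "c \<in> A" "insert c (mul c ` cl A) \<noteq> cl A"
    | (right) c where "c \<in> A" "insert c ((\<lambda>s. mul s c) ` cl A) \<noteq> cl A"
    | "card A \<ge> 2" "\<And>c. c \<in> A \<Longrightarrow> insert c (mul c ` cl A) = cl A"
      "\<And>c. c \<in> A \<Longrightarrow> insert c ((\<lambda>s. mul s c) ` cl A) = cl A"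
    by (meson not_le)
  then show ?case
  proof cases
    case 1
    then consider "A = {}" | a where "A = {a}"
      by (metis One_nat_def card_1_singletonE card_eq_0_iff finite less_2_cases)
    then show ?thesis
      using list_approximant_empty list_approximant_singleton by metis
  next
    case left
    have C: "card (insert c (mul c ` cl A)) < card (cl A)"
      using left by (intro psubset_card_mono) (auto intro: sharp_closure.intros)
    show ?thesis
    proof (rule list_approximant_left_reduction[OF left(1)])
      show "\<exists>R. list_approximant le mul one sh (A - {c}) R"
        using smaller_letters[OF left(1)] .
      show "\<exists>R. list_approximant le mul one sh T R" if "T \<subseteq> insert c (mul c ` cl A)" for T
        using smaller_closure[OF C] sharp_closure_left_coset[OF sharp_closure.base[OF left(1)] that] .
    qed
  next
    case right
    interpret swapped: monoid_with_merge le "\<lambda>a b. mul b a" one sh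
      by (rule monoid_with_merge_swap)
    have swap_approx: "\<exists>R. list_approximant le (\<lambda>a b. mul b a) one sh B R"
      if "\<exists>R. list_approximant le mul one sh B R" for B
      using that swapped.list_approximant_swap by auto
    have C: "card (insert c ((\<lambda>s. mul s c) ` cl A)) < card (cl A)"
      using right by (intro psubset_card_mono) (auto intro: sharp_closure.intros)
    have "\<exists>R. list_approximant le (\<lambda>a b. mul b a) one sh A R"
    proof (rule swapped.list_approximant_left_reduction[OF right(1)])
      show "\<exists>R. list_approximant le (\<lambda>a b. mul b a) one sh (A - {c}) R"
        using swap_approx[OF smaller_letters[OF right(1)]] .
      show "\<exists>R. list_approximant le (\<lambda>a b. mul b a) one sh T R"
        if "T \<subseteq> insert c ((\<lambda>s. mul s c) ` swapped.cl A)" for T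
        using swap_approx smaller_closure[OF C] swapped.sharp_closure_left_coset[OF _ that]
        by (simp add: sharp_closure_swap[of mul] sharp_closure.base right(1))
    qed
    then show ?thesis
      using list_approximant_swap by blast
  next
    case 4
    then show ?thesis
      by (rule list_approximant_without_reduction)
  qed
qed

end

lemma ordword_restr: "ordword u \<Longrightarrow> ordword (restr (fst u) S, w)"
  unfolding ordword_def restr_def by (simp add: Well_order_Restr)

lemma wdom_restr: "ordword u \<Longrightarrow> S \<subseteq> wdom u \<Longrightarrow> wdom (restr (fst u) S, w) = S"
  using Refl_Field_Restr2[of "fst u" S] unfolding ordword_def restr_def wdom_def order_on_defs
  by simp

lemma two_point_order: "Well_order {(0::nat, 0), (0, 1), (1, 1)}" "Field {(0::nat, 0), (0, 1), (1, 1)} = {0, 1}"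
proof -
  have "natLeq_on 2 = {(0::nat, 0), (0, 1), (1, 1)}"
    by (auto simp: less_2_cases_iff)
  then show "Well_order {(0::nat, 0), (0, 1), (1, 1)}"
    using natLeq_on_Well_order[of 2] by simp
  show "Field {(0::nat, 0), (0, 1), (1, 1)} = {0, 1}"
    unfolding Field_def by auto
qed

locale ordinal_monoid =
  fixes le :: "'m \<Rightarrow> 'm \<Rightarrow> bool" and pi :: "'m oword \<Rightarrow> 'm"
  assumes ordered_ordinal_monoid: "ordered_ordinal_monoid le pi"
begin

lemmas axioms = ordered_ordinal_monoid[unfolded ordered_ordinal_monoid_def]

lemma le_refl: "le x x"
  using axioms[THEN conjunct1] by blast

lemma le_trans: "le x y \<Longrightarrow> le y z \<Longrightarrow> le x z"
  using axioms[THEN conjunct2, THEN conjunct1] by blast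

lemma pi_word_iso: "ordword u \<Longrightarrow> ordword v \<Longrightarrow> word_iso u v \<Longrightarrow> pi u = pi v"
  using axioms[THEN conjunct2, THEN conjunct2, THEN conjunct2, THEN conjunct1] by blast

lemma pi_singleton: "pi ({(n, n)}, w) = w n"
  using axioms[THEN conjunct2, THEN conjunct2, THEN conjunct2, THEN conjunct2, THEN conjunct1]
  by blast

lemma pi_blocks:
  "ordword u \<Longrightarrow> (\<And>x. x \<in> wdom u \<Longrightarrow> bk x \<in> wdom u \<and> bk (bk x) = bk x) \<Longrightarrow>
    (\<And>x y z. x \<in> wdom u \<Longrightarrow> z \<in> wdom u \<Longrightarrow> (x, y) \<in> fst u \<Longrightarrow> (y, z) \<in> fst u \<Longrightarrow>
      bk x = bk z \<Longrightarrow> bk y = bk x) \<Longrightarrow>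
    pi u = pi (restr (fst u) (bk ` wdom u), \<lambda>m. pi (restr (fst u) {x \<in> wdom u. bk x = m}, snd u))"
  using axioms[THEN conjunct2, THEN conjunct2, THEN conjunct2, THEN conjunct2, THEN conjunct2,
      THEN conjunct1, rule_format] .

lemma pi_delete_units:
  "ordword u \<Longrightarrow> E \<subseteq> wdom u \<Longrightarrow> (\<And>e. e \<in> E \<Longrightarrow> snd u e = pi empty_word) \<Longrightarrow>
    pi u = pi (restr (fst u) (wdom u - E), snd u)"
  using axioms[THEN conjunct2, THEN conjunct2, THEN conjunct2, THEN conjunct2, THEN conjunct2,
      THEN conjunct2, THEN conjunct1, rule_format] .

lemma pi_mono:
  "ordword (r, w) \<Longrightarrow> (\<And>x. x \<in> Field r \<Longrightarrow> le (w x) (w' x)) \<Longrightarrow> le (pi (r, w)) (pi (r, w'))"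
  using axioms[THEN conjunct2, THEN conjunct2, THEN conjunct2, THEN conjunct2, THEN conjunct2,
      THEN conjunct2, THEN conjunct2, rule_format] .

abbreviation one :: 'm where
  "one \<equiv> pi empty_word"

end

context ordinal_monoid
begin

lemma pi_iso:
  assumes "Well_order r" "Well_order r'" "bij_betw f (Field r) (Field r')"
    and "\<And>a b. (a, b) \<in> r \<Longrightarrow> (f a, f b) \<in> r'" "\<And>x. x \<in> Field r \<Longrightarrow> w' (f x) = w x"
  shows "pi (r, w) = pi (r', w')"
proof (rule pi_word_iso)
  show "ordword (r, w)" "ordword (r', w')"
    using assms unfolding ordword_def by auto
  have "iso r r' f"
    using assms by (simp add: iso_iff3 compat_def)
  then show "word_iso (r, w) (r', w')"
    unfolding word_iso_def wdom_def using assms(5) by auto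
qed

lemma pi_two:
  assumes "ordword (r, w)" "Field r = {p, q}" "(p, q) \<in> r" "p \<noteq> q"
  shows "pi (r, w) = mult pi (w p) (w q)"
  unfolding mult_def
proof (rule pi_iso[where f = "\<lambda>x. if x = p then 0 else 1"])
  show wo: "Well_order r"
    using assms(1) unfolding ordword_def by simp
  then have "(q, p) \<notin> r"
    using assms(3,4) unfolding order_on_defs antisym_def by blast
  moreover have "r \<subseteq> Field r \<times> Field r"
    by (auto intro: FieldI1 FieldI2)
  ultimately have r: "r \<subseteq> {(p, p), (p, q), (q, q)}"
    using assms(2) by auto
  show "Well_order {(0::nat, 0), (0, 1), (1, 1)}"
    by (rule two_point_order)
  show "bij_betw (\<lambda>x. if x = p then 0 else 1) (Field r) (Field {(0::nat, 0), (0, 1), (1, 1)})"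
    unfolding two_point_order(2) assms(2) bij_betw_def inj_on_def using assms(4) by auto
  show "((if a = p then 0 else 1), (if b = p then 0 else 1)) \<in> {(0::nat, 0), (0, 1), (1, 1)}"
    if "(a, b) \<in> r" for a b
    using that r assms(4) by auto
  show "(if (if x = p then 0 else 1) = (0::nat) then w p else w q) = w x" if "x \<in> Field r" for x
    using that assms(2) by auto
qed

lemma pi_split:
  assumes u: "ordword u" and PQ: "P \<union> Q = wdom u" "P \<inter> Q = {}" "P \<noteq> {}" "Q \<noteq> {}"
    and before: "\<And>p q. p \<in> P \<Longrightarrow> q \<in> Q \<Longrightarrow> (p, q) \<in> fst u"
  shows "pi u = mult pi (pi (restr (fst u) P, snd u)) (pi (restr (fst u) Q, snd u))"
proof -
  obtain p0 q0 where p0: "p0 \<in> P" and q0: "q0 \<in> Q"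
    using PQ(3,4) by blast
  define bk where "bk x = (if x \<in> P then p0 else q0)" for x
  have antisym: "antisym (fst u)"
    using u unfolding ordword_def order_on_defs by blast
  have "pi u = pi (restr (fst u) (bk ` wdom u), \<lambda>m. pi (restr (fst u) {x \<in> wdom u. bk x = m}, snd u))"
  proof (rule pi_blocks[OF u])
    show "bk x \<in> wdom u \<and> bk (bk x) = bk x" if "x \<in> wdom u" for x
      using p0 q0 PQ unfolding bk_def by auto
    show "bk y = bk x"
      if "x \<in> wdom u" "z \<in> wdom u" "(x, y) \<in> fst u" "(y, z) \<in> fst u" "bk x = bk z" for x y z
    proof -
      have "y \<in> wdom u"
        using that(3) unfolding wdom_def by (auto intro: FieldI2)
      then show ?thesis
        using that before[of y x] before[of z y] antisym p0 q0 PQ(1,2)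
        unfolding bk_def antisym_def by (auto split: if_splits)
    qed
  qed
  also have "bk ` wdom u = {p0, q0}"
    using p0 q0 PQ unfolding bk_def by auto
  also have "pi (restr (fst u) {p0, q0}, \<lambda>m. pi (restr (fst u) {x \<in> wdom u. bk x = m}, snd u)) =
      mult pi (pi (restr (fst u) {x \<in> wdom u. bk x = p0}, snd u))
        (pi (restr (fst u) {x \<in> wdom u. bk x = q0}, snd u))"
  proof (rule pi_two)
    show "ordword (restr (fst u) {p0, q0}, \<lambda>m. pi (restr (fst u) {x \<in> wdom u. bk x = m}, snd u))"
      by (rule ordword_restr[OF u])
    show "Field (restr (fst u) {p0, q0}) = {p0, q0}"
      using wdom_restr[OF u, of "{p0, q0}"] p0 q0 PQ(1) unfolding wdom_def by auto
    show "(p0, q0) \<in> restr (fst u) {p0, q0}"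
      using before p0 q0 unfolding restr_def by auto
    show "p0 \<noteq> q0"
      using p0 q0 PQ(2) by blast
  qed
  finally have "pi u = mult pi (pi (restr (fst u) {x \<in> wdom u. bk x = p0}, snd u))
      (pi (restr (fst u) {x \<in> wdom u. bk x = q0}, snd u))" .
  moreover have "{x \<in> wdom u. bk x = p0} = P" "{x \<in> wdom u. bk x = q0} = Q"
    using p0 q0 PQ unfolding bk_def by auto
  ultimately show ?thesis
    by simp
qed

lemma mult_one_right: "mult pi a one = a"
proof -
  let ?u = "({(0::nat, 0::nat), (0, 1), (1, 1)}, \<lambda>n::nat. if n = 0 then a else one)"
  have u: "ordword ?u" "{1} \<subseteq> wdom ?u"
    using two_point_order unfolding ordword_def wdom_def by auto
  have "pi ?u = pi (restr (fst ?u) (wdom ?u - {1}), snd ?u)"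
    by (rule pi_delete_units[OF u]) simp
  moreover have "restr (fst ?u) (wdom ?u - {1}) = {(0, 0)}"
    unfolding restr_def wdom_def two_point_order(2) by auto
  ultimately show ?thesis
    unfolding mult_def using pi_singleton[of 0] by simp
qed

lemma mult_one_left: "mult pi one a = a"
proof -
  let ?u = "({(0::nat, 0::nat), (0, 1), (1, 1)}, \<lambda>n::nat. if n = 0 then one else a)"
  have u: "ordword ?u" "{0} \<subseteq> wdom ?u"
    using two_point_order unfolding ordword_def wdom_def by auto
  have "pi ?u = pi (restr (fst ?u) (wdom ?u - {0}), snd ?u)"
    by (rule pi_delete_units[OF u]) simp
  moreover have "restr (fst ?u) (wdom ?u - {0}) = {(1, 1)}"
    unfolding restr_def wdom_def two_point_order(2) by auto
  ultimately show ?thesis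
    unfolding mult_def using pi_singleton[of 1] by simp
qed

lemma mult_mono: "le a a' \<Longrightarrow> le b b' \<Longrightarrow> le (mult pi a b) (mult pi a' b')"
  unfolding mult_def by (rule pi_mono) (use two_point_order in \<open>auto simp: ordword_def\<close>)

lemma mult_assoc: "mult pi (mult pi a b) c = mult pi a (mult pi b c)"
proof -
  define w where "w n = (if n = 0 then a else if n = 1 then b else c)" for n :: nat
  define u where "u = (natLeq_on 3, w)"
  have u: "ordword u"
    unfolding u_def ordword_def using natLeq_on_Well_order by simp
  have "{x::nat. x < 3} = {0, 1, 2}"
    by (auto simp: numeral_3_eq_3 less_Suc_eq)
  then have D: "wdom u = {0, 1, 2}"
    using Field_natLeq_on[of 3] unfolding u_def wdom_def by simp
  have F01: "Field (restr (fst u) {0, 1}) = {0, 1}" and F12: "Field (restr (fst u) {1, 2}) = {1, 2}"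
    using wdom_restr[OF u, of "{0, 1}"] wdom_restr[OF u, of "{1, 2}"] D unfolding wdom_def by auto
  have single: "pi (restr (fst u) {i}, snd u) = w i" if "i < 3" for i
    using pi_singleton[of i w] that unfolding u_def restr_def by (simp add: Int_insert_right)
  have "pi u = mult pi (pi (restr (fst u) {0}, snd u)) (pi (restr (fst u) {1, 2}, snd u))"
    by (rule pi_split[OF u]) (auto simp: D, auto simp: u_def)
  also have "pi (restr (fst u) {1, 2}, snd u) = mult pi b c"
    using pi_two[OF ordword_restr[OF u] F12] unfolding u_def restr_def w_def by auto
  finally have "pi u = mult pi a (mult pi b c)"
    using single[of 0] unfolding u_def w_def by simp
  moreover have "pi u = mult pi (pi (restr (fst u) {0, 1}, snd u)) (pi (restr (fst u) {2}, snd u))"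
    by (rule pi_split[OF u]) (auto simp: D, auto simp: u_def)
  moreover have "pi (restr (fst u) {0, 1}, snd u) = mult pi a b"
    using pi_two[OF ordword_restr[OF u] F01] unfolding u_def restr_def w_def by auto
  ultimately show ?thesis
    using single[of 2] unfolding u_def w_def by simp
qed

end

definition rank :: "'a oword \<Rightarrow> nat \<Rightarrow> nat" where
  "rank u p = card {q \<in> wdom u. (q, p) \<in> fst u \<and> q \<noteq> p}"

definition list_of :: "'a oword \<Rightarrow> 'a list" where
  "list_of u = map (\<lambda>i. snd u (inv_into (wdom u) (rank u) i)) [0..<card (wdom u)]"

locale finite_word =
  fixes u :: "'a oword"
  assumes ordword: "ordword u" and finite_dom: "finite (wdom u)"
begin

lemma order_facts:
  "trans (fst u)" "antisym (fst u)"
  "\<And>p. p \<in> wdom u \<Longrightarrow> (p, p) \<in> fst u"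
  "\<And>p q. p \<in> wdom u \<Longrightarrow> q \<in> wdom u \<Longrightarrow> p \<noteq> q \<Longrightarrow> (p, q) \<in> fst u \<or> (q, p) \<in> fst u"
  "\<And>p q. (p, q) \<in> fst u \<Longrightarrow> p \<in> wdom u \<and> q \<in> wdom u"
  using ordword unfolding ordword_def order_on_defs refl_on_def total_on_def wdom_def
  by (auto intro: FieldI1 FieldI2)

lemma rank_less:
  assumes "p \<in> wdom u" "q \<in> wdom u" "(p, q) \<in> fst u" "p \<noteq> q"
  shows "rank u p < rank u q"
proof -
  have "{y \<in> wdom u. (y, p) \<in> fst u \<and> y \<noteq> p} \<subset> {y \<in> wdom u. (y, q) \<in> fst u \<and> y \<noteq> q}"
    using assms order_facts(1,2) unfolding trans_def antisym_def by blast
  then show ?thesis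
    unfolding rank_def by (rule psubset_card_mono[rotated]) (use finite_dom in simp)
qed

lemma rank_less_card: "p \<in> wdom u \<Longrightarrow> rank u p < card (wdom u)"
proof -
  assume p: "p \<in> wdom u"
  have "rank u p \<le> card (wdom u - {p})"
    unfolding rank_def by (intro card_mono) (use finite_dom in auto)
  also have "\<dots> < card (wdom u)"
    by (rule card_Diff1_less[OF finite_dom p])
  finally show ?thesis .
qed

lemma rank_less_iff:
  assumes "p \<in> wdom u" "q \<in> wdom u"
  shows "rank u p < rank u q \<longleftrightarrow> (p, q) \<in> fst u \<and> p \<noteq> q"
  using rank_less[OF assms] rank_less[OF assms(2,1)] order_facts(4)[OF assms] by fastforce

lemma inj_on_rank: "inj_on (rank u) (wdom u)"
  by (rule inj_onI) (metis less_irrefl order_facts(4) rank_less)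

lemma rank_image: "rank u ` wdom u = {0..<card (wdom u)}"
proof (rule card_subset_eq)
  show "rank u ` wdom u \<subseteq> {0..<card (wdom u)}"
    using rank_less_card by auto
  show "card (rank u ` wdom u) = card {0..<card (wdom u)}"
    using card_image[OF inj_on_rank] by simp
qed simp

lemma ex_rank_iff: "(\<exists>p\<in>wdom u. P (rank u p)) \<longleftrightarrow> (\<exists>i<card (wdom u). P i)"
  using rank_image by (metis (no_types, lifting) atLeastLessThan_iff image_iff zero_le)

lemma length_list_of: "length (list_of u) = card (wdom u)"
  unfolding list_of_def by simp

lemma nth_list_of_rank: "p \<in> wdom u \<Longrightarrow> list_of u ! rank u p = snd u p"
  unfolding list_of_def using rank_less_card[of p] inv_into_f_f[OF inj_on_rank] by simp

lemma list_of_eqI: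
  assumes "length L = card (wdom u)" "\<And>p. p \<in> wdom u \<Longrightarrow> L ! rank u p = snd u p"
  shows "list_of u = L"
proof (rule nth_equalityI)
  show "length (list_of u) = length L"
    using assms(1) length_list_of by simp
  show "list_of u ! i = L ! i" if i: "i < length (list_of u)" for i
  proof -
    obtain p where "p \<in> wdom u" "i = rank u p"
      using i rank_image length_list_of by (metis atLeastLessThan_iff image_iff zero_le)
    then show ?thesis
      using assms(2) nth_list_of_rank by simp
  qed
qed

lemma set_list_of: "set (list_of u) = snd u ` wdom u"
proof -
  have "set (list_of u) = (\<lambda>i. list_of u ! i) ` {0..<card (wdom u)}"
    by (auto simp: in_set_conv_nth length_list_of)
  also have "\<dots> = (\<lambda>p. list_of u ! rank u p) ` wdom u"
    unfolding rank_image[symmetric] by (simp add: image_image)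
  finally show ?thesis
    using nth_list_of_rank by simp
qed

lemma sat_iff_sat_list:
  "\<forall>v\<in>fv f. s v \<in> wdom u \<Longrightarrow> sat u s f \<longleftrightarrow> sat_list (list_of u) (\<lambda>v. rank u (s v)) f"
proof (induction f arbitrary: s)
  case (FLess x y)
  then show ?case
    using rank_less_iff[of "s x" "s y"] by auto
next
  case (FEq x y)
  then show ?case
    using inj_on_rank unfolding inj_on_def by auto
next
  case (FLetter a x)
  then show ?case
    using nth_list_of_rank[of "s x"] by auto
next
  case (FEx x f)
  have "sat u (s(x := p)) f \<longleftrightarrow> sat_list (list_of u) ((\<lambda>v. rank u (s v))(x := rank u p)) f"
    if "p \<in> wdom u" for p
  proof -
    have "\<forall>v\<in>fv f. (s(x := p)) v \<in> wdom u"
      using FEx.prems that by auto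
    then have "sat u (s(x := p)) f \<longleftrightarrow> sat_list (list_of u) (\<lambda>v. rank u ((s(x := p)) v)) f"
      by (rule FEx.IH)
    moreover have "(\<lambda>v. rank u ((s(x := p)) v)) = (\<lambda>v. rank u (s v))(x := rank u p)"
      by auto
    ultimately show ?thesis
      by simp
  qed
  then have "sat u s (FEx x f) \<longleftrightarrow>
      (\<exists>p\<in>wdom u. sat_list (list_of u) ((\<lambda>v. rank u (s v))(x := rank u p)) f)"
    by simp
  also have "\<dots> \<longleftrightarrow> (\<exists>i<card (wdom u). sat_list (list_of u) ((\<lambda>v. rank u (s v))(x := i)) f)"
    by (rule ex_rank_iff)
  finally show ?case
    by (simp add: length_list_of)
qed simp_all

lemma sat_closed_iff: "fv f = {} \<Longrightarrow> sat u s f \<longleftrightarrow> sat_list (list_of u) (\<lambda>_. 0) f"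
  using sat_iff_sat_list[of f s] sat_list_closed[of f "list_of u" "\<lambda>v. rank u (s v)"] by simp

end

context finite_word
begin

lemma last_position:
  assumes "wdom u \<noteq> {}"
  obtains m where "m \<in> wdom u" "rank u m = card (wdom u) - 1"
    "\<And>p. p \<in> wdom u \<Longrightarrow> p \<noteq> m \<Longrightarrow> (p, m) \<in> fst u"
proof -
  have "card (wdom u) - 1 \<in> rank u ` wdom u"
    using rank_image assms finite_dom by (simp add: card_gt_0_iff)
  then obtain m where m: "m \<in> wdom u" "rank u m = card (wdom u) - 1"
    by (metis imageE)
  moreover have "(p, m) \<in> fst u" if "p \<in> wdom u" "p \<noteq> m" for p
  proof (rule ccontr)
    assume "(p, m) \<notin> fst u"
    then have "rank u m < rank u p"
      using order_facts(4)[OF that(1) m(1) that(2)] rank_less[OF m(1) that(1)] that(2) by blast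
    with rank_less_card[OF that(1)] m(2) show False
      by linarith
  qed
  ultimately show ?thesis
    using that by blast
qed

lemma list_of_remove_last:
  assumes m: "m \<in> wdom u" "rank u m = card (wdom u) - 1"
  shows "list_of (restr (fst u) (wdom u - {m}), snd u) @ [snd u m] = list_of u"
proof -
  define u' where "u' = (restr (fst u) (wdom u - {m}), snd u)"
  have dom': "wdom u' = wdom u - {m}"
    unfolding u'_def by (rule wdom_restr[OF ordword]) auto
  interpret u': finite_word u'
  proof
    show "ordword u'"
      unfolding u'_def by (rule ordword_restr[OF ordword])
    show "finite (wdom u')"
      using finite_dom dom' by simp
  qed
  have fst': "fst u' = restr (fst u) (wdom u - {m})"
    unfolding u'_def by simp
  have rank': "rank u' p = rank u p" if "p \<in> wdom u'" for p
  proof -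
    have p: "p \<in> wdom u" "p \<noteq> m"
      using that dom' by auto
    have "\<not> ((m, p) \<in> fst u \<and> m \<noteq> p)"
    proof
      assume "(m, p) \<in> fst u \<and> m \<noteq> p"
      then have "rank u m < rank u p"
        using rank_less[OF m(1) p(1)] by blast
      with rank_less_card[OF p(1)] m(2) show False
        by linarith
    qed
    then have "{q \<in> wdom u'. (q, p) \<in> fst u' \<and> q \<noteq> p} = {q \<in> wdom u. (q, p) \<in> fst u \<and> q \<noteq> p}"
      using p unfolding dom' fst' restr_def by blast
    then show ?thesis
      unfolding rank_def by simp
  qed
  have card': "card (wdom u') = card (wdom u) - 1" and "card (wdom u) > 0"
    using dom' m(1) finite_dom by (auto simp: card_gt_0_iff)
  show ?thesis
    unfolding u'_def[symmetric]
  proof (rule list_of_eqI[symmetric])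
    show "length (list_of u' @ [snd u m]) = card (wdom u)"
      using u'.length_list_of card' \<open>card (wdom u) > 0\<close> by simp
    show "(list_of u' @ [snd u m]) ! rank u p = snd u p" if "p \<in> wdom u" for p
    proof (cases "p = m")
      case True
      then show ?thesis
        using u'.length_list_of card' m(2) by (simp add: nth_append)
    next
      case False
      then have "p \<in> wdom u'"
        using that dom' by simp
      then show ?thesis
        using u'.nth_list_of_rank u'.rank_less_card rank' u'.length_list_of
        by (simp add: nth_append u'_def)
    qed
  qed
qed

end

context ordinal_monoid
begin

lemma mprod_snoc: "mprod (mult pi) one (L @ [x]) = mult pi (mprod (mult pi) one L) x"
  by (induction L) (simp_all add: mult_one_left mult_one_right mult_assoc)

lemma pi_eq_mprod_list_of:
  assumes "ordword u" "finite (wdom u)" "wdom u \<noteq> {}"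
  shows "pi u = mprod (mult pi) one (list_of u)"
  using assms
proof (induction "card (wdom u)" arbitrary: u rule: less_induct)
  case less
  interpret finite_word u
    using less.prems by unfold_locales
  obtain m where m: "m \<in> wdom u" "rank u m = card (wdom u) - 1"
    and below: "\<And>p. p \<in> wdom u \<Longrightarrow> p \<noteq> m \<Longrightarrow> (p, m) \<in> fst u"
    using last_position[OF less.prems(3)] by blast
  have last: "pi (restr (fst u) {m}, snd u) = snd u m"
    using order_facts(3)[OF m(1)] pi_singleton[of m "snd u"] unfolding restr_def
    by (simp add: Int_absorb1)
  define D where "D = wdom u - {m}"
  have dom: "wdom (restr (fst u) D, snd u) = D"
    unfolding D_def by (rule wdom_restr[OF less.prems(1)]) auto
  have list: "list_of u = list_of (restr (fst u) D, snd u) @ [snd u m]"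
    using list_of_remove_last[OF m] unfolding D_def by simp
  show ?case
  proof (cases "D = {}")
    case True
    then have "restr (fst u) {m} = fst u"
      using order_facts(5) m(1) unfolding D_def restr_def by auto
    then have "pi u = snd u m"
      using last by simp
    moreover have "list_of (restr (fst u) D, snd u) = []"
      using dom True unfolding list_of_def by simp
    ultimately show ?thesis
      using list by (simp add: mult_one_right)
  next
    case False
    have "pi u = mult pi (pi (restr (fst u) D, snd u)) (pi (restr (fst u) {m}, snd u))"
      by (rule pi_split[OF less.prems(1)]) (use m below False in \<open>auto simp: D_def\<close>)
    also have "pi (restr (fst u) D, snd u) = mprod (mult pi) one (list_of (restr (fst u) D, snd u))"
    proof (rule less.hyps)
      show "card (wdom (restr (fst u) D, snd u)) < card (wdom u)"
        using dom card_Diff1_less[OF less.prems(2) m(1)] unfolding D_def by simp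
    qed (use ordword_restr[OF less.prems(1)] dom False less.prems(2) in \<open>auto simp: D_def\<close>)
    finally show ?thesis
      using last list mprod_snoc by simp
  qed
qed

end

abbreviation less_in :: "'a oword \<Rightarrow> nat \<Rightarrow> nat \<Rightarrow> bool" where
  "less_in u x y \<equiv> (x, y) \<in> fst u \<and> x \<noteq> y"

definition immediate_predecessors :: "'a oword \<Rightarrow> bool" where
  "immediate_predecessors u \<longleftrightarrow> (\<forall>x\<in>wdom u. (\<exists>y\<in>wdom u. less_in u y x) \<longrightarrow>
     (\<exists>y\<in>wdom u. less_in u y x \<and> \<not> (\<exists>z\<in>wdom u. less_in u y z \<and> less_in u z x)))"

definition has_last :: "'a oword \<Rightarrow> bool" where
  "has_last u \<longleftrightarrow> wdom u \<noteq> {} \<longrightarrow> (\<exists>x\<in>wdom u. \<not> (\<exists>y\<in>wdom u. less_in u x y))"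

definition finite_fo :: "'a fo" where
  "finite_fo = FConj
     (FNeg (FEx 0 (FConj (FEx 1 (FLess 1 0))
       (FNeg (FEx 1 (FConj (FLess 1 0) (FNeg (FEx 2 (FConj (FLess 1 2) (FLess 2 0))))))))))
     (FNeg (FConj (FEx 0 (FEq 0 0)) (FNeg (FEx 0 (FNeg (FEx 1 (FLess 0 1)))))))"

lemma fv_finite_fo: "fv finite_fo = {}"
  unfolding finite_fo_def by auto

lemma sat_finite_fo: "sat u s finite_fo \<longleftrightarrow> immediate_predecessors u \<and> has_last u"
  unfolding finite_fo_def immediate_predecessors_def has_last_def by simp blast

lemma (in finite_word) immediate_predecessors_has_last: "immediate_predecessors u \<and> has_last u"
proof -
  have max_rank: "\<exists>y\<in>Y. \<forall>z\<in>Y. rank u z \<le> rank u y" if "Y \<noteq> {}" "Y \<subseteq> wdom u" for Y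
  proof -
    have fin: "finite (rank u ` Y)"
      using finite_subset[OF that(2) finite_dom] by simp
    then have "Max (rank u ` Y) \<in> rank u ` Y"
      using that(1) by (intro Max_in) auto
    then obtain y where y: "y \<in> Y" "rank u y = Max (rank u ` Y)"
      by (metis imageE)
    have "rank u z \<le> rank u y" if "z \<in> Y" for z
      unfolding y(2) using Max_ge[OF fin] that by blast
    with y(1) show ?thesis
      by blast
  qed
  have "\<exists>y\<in>wdom u. less_in u y x \<and> \<not> (\<exists>z\<in>wdom u. less_in u y z \<and> less_in u z x)"
    if x: "x \<in> wdom u" "\<exists>y\<in>wdom u. less_in u y x" for x
  proof -
    obtain y where y: "y \<in> wdom u" "less_in u y x"
      and max: "\<And>z. z \<in> wdom u \<Longrightarrow> less_in u z x \<Longrightarrow> rank u z \<le> rank u y"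
      using max_rank[of "{y \<in> wdom u. less_in u y x}"] x(2) by auto
    then show ?thesis
      using rank_less by (meson leD)
  qed
  moreover have "has_last u"
  proof (unfold has_last_def, intro impI)
    assume "wdom u \<noteq> {}"
    then obtain m where m: "m \<in> wdom u" "rank u m = card (wdom u) - 1"
      using last_position by blast
    have "\<not> less_in u m y" if "y \<in> wdom u" for y
    proof
      assume "less_in u m y"
      then have "rank u m < rank u y"
        using rank_less[OF m(1) that] by blast
      with rank_less_card[OF that] m(2) show False
        by linarith
    qed
    with m(1) show "\<exists>x\<in>wdom u. \<not> (\<exists>y\<in>wdom u. less_in u x y)"
      by blast
  qed
  ultimately show ?thesis
    unfolding immediate_predecessors_def by blast
qed

text \<open>Conversely, in a well-order with immediate predecessors every initial segment is finite
  (by well-founded induction), hence so is the domain once there is a last element.\<close>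

lemma finite_if_immediate_predecessors_has_last:
  assumes "ordword u" "immediate_predecessors u" "has_last u"
  shows "finite (wdom u)"
proof -
  have wo: "Well_order (fst u)"
    using assms(1) unfolding ordword_def .
  have dom: "(x, y) \<in> fst u \<Longrightarrow> x \<in> wdom u \<and> y \<in> wdom u" for x y
    unfolding wdom_def by (auto intro: FieldI1 FieldI2)
  have refl: "x \<in> wdom u \<Longrightarrow> (x, x) \<in> fst u" for x
    using wo unfolding order_on_defs refl_on_def wdom_def by blast
  have total: "x \<in> wdom u \<Longrightarrow> y \<in> wdom u \<Longrightarrow> x \<noteq> y \<Longrightarrow> (x, y) \<in> fst u \<or> (y, x) \<in> fst u" for x y
    using wo unfolding order_on_defs total_on_def wdom_def by blast
  have segment: "finite {y. (y, x) \<in> fst u}" if "x \<in> wdom u" for x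
    using that
  proof (induction x rule: wf_induct_rule[OF wo[unfolded order_on_defs, THEN conjunct2]])
    case (1 x)
    show ?case
    proof (cases "\<exists>y\<in>wdom u. less_in u y x")
      case False
      then have "{y. (y, x) \<in> fst u} \<subseteq> {x}"
        using dom by blast
      then show ?thesis
        using finite_subset by blast
    next
      case True
      then obtain y where y: "y \<in> wdom u" "less_in u y x"
        and imm: "\<not> (\<exists>z\<in>wdom u. less_in u y z \<and> less_in u z x)"
        using assms(2) 1(2) unfolding immediate_predecessors_def by blast
      have "{z. (z, x) \<in> fst u} \<subseteq> insert x {z. (z, y) \<in> fst u}"
        using imm total y(1) dom refl by blast
      moreover have "finite {z. (z, y) \<in> fst u}"
        using 1(1)[of y] y by blast
      ultimately show ?thesis
        using finite_subset by blast
    qed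
  qed
  show ?thesis
  proof (cases "wdom u = {}")
    case False
    then obtain m where m: "m \<in> wdom u" "\<not> (\<exists>y\<in>wdom u. less_in u m y)"
      using assms(3) unfolding has_last_def by blast
    then have "wdom u \<subseteq> {y. (y, m) \<in> fst u}"
      using total refl by blast
    then show ?thesis
      using segment[OF m(1)] finite_subset by blast
  qed simp
qed

lemma sat_finite_fo_iff: "ordword u \<Longrightarrow> sat u s finite_fo \<longleftrightarrow> finite (wdom u)"
  using sat_finite_fo finite_word.immediate_predecessors_has_last[of u]
    finite_if_immediate_predecessors_has_last[of u]
  unfolding finite_word_def by blast

locale finite_ordinal_monoid = ordinal_monoid le pi
  for le :: "'m::finite \<Rightarrow> 'm \<Rightarrow> bool" and pi

sublocale finite_ordinal_monoid \<subseteq> preordered_monoid le "mult pi" "pi empty_word"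
  by unfold_locales (auto simp: le_refl mult_assoc mult_one_left mult_one_right intro: le_trans mult_mono)

context finite_ordinal_monoid
begin

lemma mpow_eq_npow: "n \<ge> 1 \<Longrightarrow> mpow pi a n = npow a n"
proof -
  assume n: "n \<ge> 1"
  define u where "u = ({(i, j). i \<le> j \<and> j < n}, \<lambda>_::nat. a)"
  have r: "{(i, j). i \<le> j \<and> j < n} = natLeq_on n"
    by auto
  have u: "ordword u" "wdom u = {..<n}"
    unfolding u_def ordword_def wdom_def r using natLeq_on_Well_order Field_natLeq_on by (auto simp: lessThan_def)
  interpret finite_word u
    using u by unfold_locales simp_all
  have "list_of u = replicate n a"
    by (rule list_of_eqI) (use u rank_less_card in \<open>auto simp: u_def\<close>)
  moreover have "0 \<in> wdom u"
    using u(2) n by simp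
  ultimately show ?thesis
    using pi_eq_mprod_list_of[OF u(1) finite_dom] unfolding mpow_def u_def by auto
qed

lemma idem_plus_eventually_npow: "\<exists>i. \<forall>n\<ge>i. idem_plus pi a n = npow a n"
proof -
  obtain i p where p: "p \<ge> 1" and per: "\<And>t k. t \<ge> i \<Longrightarrow> npow a (t + k * p) = npow a t"
    using npow_eventually_periodic by blast
  have "idem_plus pi a n = npow a n" if "n \<ge> i" for n
  proof -
    have eventually: "mpow pi a (fact m + n) = npow a n" if m: "m \<ge> p" for m
    proof -
      obtain k where "fact m = k * p"
        using dvd_fact[OF p m] by (auto simp: dvd_def mult.commute)
      moreover have "fact m + n \<ge> 1"
        using fact_ge_1[of m, where 'a = nat] by linarith
      ultimately show ?thesis
        using per[OF \<open>n \<ge> i\<close>, of k] mpow_eq_npow by (simp add: add.commute)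
    qed
    show ?thesis
      unfolding idem_plus_def
    proof (rule the_equality)
      show "\<exists>N. \<forall>m\<ge>N. mpow pi a (fact m + n) = npow a n"
        using eventually by blast
      show "y = npow a n" if y: "\<exists>N. \<forall>m\<ge>N. mpow pi a (fact m + n) = y" for y
      proof -
        obtain N where "\<forall>m\<ge>N. mpow pi a (fact m + n) = y"
          using y by blast
        then show ?thesis
          using eventually[of "max N p"] by simp
      qed
    qed
  qed
  then show ?thesis
    by blast
qed

lemma monoid_with_merge_mult:
  assumes "ordinal_monoid_with_merge le pi sh"
  shows "monoid_with_merge le (mult pi) (pi empty_word) sh"
proof
  show "sh (mult pi a b) = mult pi a (mult pi (sh (mult pi b a)) b)" for a b
    using assms unfolding ordinal_monoid_with_merge_def by blast
  show "\<exists>N. \<forall>n\<ge>N. le (npow a n) (sh a)" for a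
    using idem_plus_eventually_npow[of a] assms unfolding ordinal_monoid_with_merge_def by metis
qed

lemma sharp_closure_eq_cl_sharp: "sharp_closure (mult pi) sh A = cl_sharp pi sh A"
proof
  show "sharp_closure (mult pi) sh A \<subseteq> cl_sharp pi sh A"
    by (rule sharp_closure_least) (auto intro: cl_sharp.intros)
  show "cl_sharp pi sh A \<subseteq> sharp_closure (mult pi) sh A"
  proof
    fix x
    assume "x \<in> cl_sharp pi sh A"
    then show "x \<in> sharp_closure (mult pi) sh A"
      by (induction rule: cl_sharp.induct) (auto intro: sharp_closure.intros)
  qed
qed

end

lemma fo_definable_finite_words:
  assumes "list_definable K"
  shows "fo_definable {u. ordword u \<and> finite (wdom u) \<and> list_of u \<in> K}"
proof -
  obtain f where f: "fv f = {}" "\<forall>w s. sat_list w s f \<longleftrightarrow> w \<in> K"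
    using assms by (rule list_definableE)
  have "sat u (\<lambda>_. 0) (FConj finite_fo f) \<longleftrightarrow> finite (wdom u) \<and> list_of u \<in> K" if "ordword u" for u
    using sat_finite_fo_iff[OF that] finite_word.sat_closed_iff[OF finite_word.intro[OF that] f(1)] f(2)
    by auto
  moreover have "fv (FConj finite_fo f) = {}"
    using f(1) fv_finite_fo by simp
  ultimately show ?thesis
    unfolding fo_definable_def by blast
qed

lemma plus_words_eq: "plus_words A = {u. ordword u \<and> finite (wdom u) \<and> list_of u \<in> plus_lists A}"
proof -
  have "wdom u \<noteq> {} \<and> snd u ` wdom u \<subseteq> A \<longleftrightarrow> list_of u \<in> plus_lists A"
    if "ordword u" "finite (wdom u)" for u :: "'a oword"
  proof -
    interpret finite_word u
      using that by unfold_locales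
    show ?thesis
      using length_list_of set_list_of that(2) unfolding plus_lists_def by auto
  qed
  then show ?thesis
    unfolding plus_words_def words_over_def by auto
qed

theorem lemma5p8:
  fixes le :: "'m::finite \<Rightarrow> 'm \<Rightarrow> bool" and pi :: "'m oword \<Rightarrow> 'm" and sh :: "'m \<Rightarrow> 'm"
    and A :: "'m set"
  assumes "ordinal_monoid_with_merge le pi sh"
  shows "\<exists>rho. fo_approximant le pi (plus_words A) (cl_sharp pi sh A) rho"
proof -
  interpret finite_ordinal_monoid le pi
    using assms unfolding ordinal_monoid_with_merge_def by unfold_locales blast
  interpret monoid_with_merge le "mult pi" "pi empty_word" sh
    using monoid_with_merge_mult[OF assms] .
  obtain R where R: "list_approximant le (mult pi) (pi empty_word) sh A R"
    using list_approximant_exists by blast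
  have "fo_approximant le pi (plus_words A) (cl_sharp pi sh A) (\<lambda>u. R (list_of u))"
    unfolding fo_approximant_def
  proof (intro conjI allI ballI)
    show "fo_definable (plus_words A)"
      unfolding plus_words_eq by (rule fo_definable_finite_words[OF list_definable_plus_lists])
    show "fo_definable {u \<in> plus_words A. R (list_of u) = m}" for m
    proof -
      have "list_definable {w \<in> plus_lists A. R w = m}"
        using R unfolding list_approximant_def by blast
      then have "fo_definable {u. ordword u \<and> finite (wdom u) \<and> list_of u \<in> {w \<in> plus_lists A. R w = m}}"
        by (rule fo_definable_finite_words)
      moreover have "{u \<in> plus_words A. R (list_of u) = m} =
          {u. ordword u \<and> finite (wdom u) \<and> list_of u \<in> {w \<in> plus_lists A. R w = m}}"
        unfolding plus_words_eq by auto
      ultimately show ?thesis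
        by simp
    qed
    fix u
    assume "u \<in> plus_words A"
    then have u: "ordword u" "finite (wdom u)" "list_of u \<in> plus_lists A"
      unfolding plus_words_eq by auto
    interpret finite_word u
      using u(1,2) by unfold_locales
    have "wdom u \<noteq> {}"
      using u(3) length_list_of unfolding plus_lists_def by auto
    then have "pi u = lprod (list_of u)"
      by (rule pi_eq_mprod_list_of[OF u(1,2)])
    then show "le (pi u) (R (list_of u))" "R (list_of u) \<in> cl_sharp pi sh A"
      using R u(3) unfolding list_approximant_def sharp_closure_eq_cl_sharp by auto
  qed
  then show ?thesis
    by blast
qed

end
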